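(* Let $\alpha(t)=(x(t),y(t))_{t\in T}$ be a decreasing path and $D=\{t-s:s,t\in T,\ t>s\}$. Then there exists a function $\varphi:D\to\mathbb{R}$ (necessarily nonnegative) with $$x(s)y(s)+x(t)y(t)-2x(s)y(t)=\varphi(t-s)\quad\text{for all } s,t\in T,\ s<t,$$ if and only if one of the following holds: (i) $x(t)=a,\ y(t)=b-ct$ for all $t\in T$, or $x(t)=b+ct,\ y(t)=a$ for all $t\in T$, for some $b\in\mathbb{R}$ and constants $a,c>0$; in both cases $\varphi(u)=acu$, $u\in D$. (ii) $x(t)=a+d(t-s^* )\mathbf{1}_{\{t>s^*\}}$, $y(t)=b-c(t-s^* )\mathbf{1}_{\{t\le s^*\}}$, $t\in T$, for some $s^*\in T^\circ$ and constants $a,b,c,d>0$ with $ac=bd$; in this case $\varphi(u)=acu$, $u\in D$. (iii) $x(t)=a+bt,\ y(t)=c-dt$, $t\in T$, for some $a,c\in\mathbb{R}$ and constants $b,d>0$; in this case $\varphi(u)=(ad+bc)u-bdu^2$, $u\in D$. (iv) $x(t)=ae^{ct},\ y(t)=be^{-ct}$, $t\in T$, for some constants $a,b,c>0$; in this case $\varphi(u)=2ab(1-e^{-cu})$, $u\in D$.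
   Context: $T\subseteq\mathbb{R}$ is an interval with interior $T^\circ$. A decreasing path is $\alpha(t)=(x(t),y(t))_{t\in T}$ with $x$ nondecreasing and $y$ nonincreasing continuous functions on $T$, both strictly positive on $T^\circ$, at least one not identically constant. *)

theory Defs
  imports "HOL-Analysis.Analysis"
begin

definition decreasing_path :: "real set \<Rightarrow> (real \<Rightarrow> real) \<Rightarrow> (real \<Rightarrow> real) \<Rightarrow> bool" where
  "decreasing_path T x y \<longleftrightarrow>
     is_interval T \<and>
     mono_on T x \<and> (\<forall>s\<in>T. \<forall>t\<in>T. s \<le> t \<longrightarrow> y t \<le> y s) \<and>
     continuous_on T x \<and> continuous_on T y \<and>
     (\<forall>t\<in>interior T. x t > 0 \<and> y t > 0) \<and>
     (\<not> (\<exists>k. \<forall>t\<in>T. x t = k) \<or> \<not> (\<exists>k. \<forall>t\<in>T. y t = k))"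

definition path_eq :: "real set \<Rightarrow> (real \<Rightarrow> real) \<Rightarrow> (real \<Rightarrow> real) \<Rightarrow> (real \<Rightarrow> real) \<Rightarrow> bool" where
  "path_eq T x y \<phi> \<longleftrightarrow>
     (\<forall>s\<in>T. \<forall>t\<in>T. s < t \<longrightarrow> x s * y s + x t * y t - 2 * x s * y t = \<phi> (t - s))"

end

theory Submission
  imports Defs
begin

text \<open>For \<open>s < t < r\<close> the equation on the pairs \<open>(s,t)\<close>, \<open>(t,r)\<close>, \<open>(s,r)\<close> shows that the
  increment product \<open>(x t - x s) (y t - y r)\<close> depends only on the gaps \<open>t - s\<close> and \<open>r - t\<close>.
  If some triple sees \<open>x\<close> rise and then \<open>y\<close> drop, translating it shows that \<open>x\<close> and \<open>y\<close> are
  strictly monotone. Translating by a fixed \<open>w\<close> then makes \<open>x (t + w)\<close> and \<open>y (t + w)\<close> affine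
  in \<open>x t\<close> and \<open>y t\<close> with reciprocal slopes; this leaves either a relation \<open>y = C - \<gamma> x\<close>, which
  forces \<open>x\<close> to be linear (iii), or a multiplicative shift, which makes \<open>ln x\<close> midpoint affine and
  \<open>x y\<close> constant (iv). Otherwise on every triple \<open>x\<close> or \<open>y\<close> is flat: one of them is constant and
  the other linear (i), or there is a kink point with \<open>x\<close> constant to its left and \<open>y\<close> constant to
  its right, the two linear pieces having balanced slopes (ii). Midpoint affine continuous functions
  are affine, and continuity carries the shapes from the interior of \<open>T\<close> to \<open>T\<close>.\<close>

section \<open>Midpoint affine functions and level points\<close>

lemma midpoint_affine_le_0:
  fixes g :: "real \<Rightarrow> real"
  assumes "p < q" and cont: "continuous_on {p..q} g" and "g p = 0" and "g q = 0"
    and mid: "\<And>a b. a \<in> {p..q} \<Longrightarrow> b \<in> {p..q} \<Longrightarrow> a < b \<Longrightarrow> g ((a + b) / 2) = (g a + g b) / 2"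
    and "t \<in> {p..q}"
  shows "g t \<le> 0"
proof -
  obtain tm where tm: "tm \<in> {p..q}" "\<forall>s\<in>{p..q}. g s \<le> g tm"
    using continuous_attains_sup[OF compact_Icc _ cont] \<open>p < q\<close> by auto
  define M where "M = g tm"
  define Z where "Z = {s \<in> {p..q}. g s = M}"
  have "closed Z" "Z \<noteq> {}" "bdd_below Z"
    using continuous_closed_preimage_constant[OF cont] tm
    by (auto simp: Z_def M_def intro: bdd_belowI[of _ p])
  then have Inf_in_Z: "Inf Z \<in> Z" and Inf_le_Z: "\<And>z. z \<in> Z \<Longrightarrow> Inf Z \<le> z"
    by (auto intro: closed_contains_Inf cInf_lower)
  text \<open>At the leftmost maximum point the midpoint identity fails: the value to its left is
    below \<open>M\<close> and the one to its right at most \<open>M\<close>.\<close>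
  have "M \<le> 0"
  proof (cases "Inf Z \<in> {p<..<q}")
    case True
    define d where "d = min (Inf Z - p) (q - Inf Z)"
    have d: "d > 0" "Inf Z - d \<in> {p..q}" "Inf Z + d \<in> {p..q}"
      using True by (auto simp: d_def)
    have "Inf Z - d \<notin> Z" using Inf_le_Z d by force
    then have "g (Inf Z - d) < M" using tm d unfolding Z_def M_def by force
    moreover have "g (Inf Z + d) \<le> M" using tm d unfolding M_def by auto
    moreover have "g (Inf Z) = (g (Inf Z - d) + g (Inf Z + d)) / 2"
      using mid[OF d(2,3)] d(1) by simp
    ultimately show ?thesis using Inf_in_Z unfolding Z_def by simp
  next
    case False
    then show ?thesis using Inf_in_Z \<open>g p = 0\<close> \<open>g q = 0\<close> unfolding Z_def by force
  qed
  then show ?thesis using tm \<open>t \<in> {p..q}\<close> M_def by force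
qed

lemma midpoint_affine_on_Icc:
  fixes f :: "real \<Rightarrow> real"
  assumes "p < q" and cont: "continuous_on {p..q} f"
    and mid: "\<And>a b. a \<in> {p..q} \<Longrightarrow> b \<in> {p..q} \<Longrightarrow> a < b \<Longrightarrow> f ((a + b) / 2) = (f a + f b) / 2"
    and "t \<in> {p..q}"
  shows "f t = f p + (f q - f p) / (q - p) * (t - p)"
proof -
  define c where "c = (f q - f p) / (q - p)"
  define g where "g s = f s - (f p + c * (s - p))" for s
  have gc: "continuous_on {p..q} g" unfolding g_def by (intro continuous_intros cont)
  have g0: "g p = 0" "g q = 0" using \<open>p < q\<close> by (simp_all add: g_def c_def)
  have gmid: "g ((a + b) / 2) = (g a + g b) / 2"
    if "a \<in> {p..q}" "b \<in> {p..q}" "a < b" for a b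
    unfolding g_def mid[OF that] by (simp add: algebra_simps add_divide_distrib diff_divide_distrib)
  have "g t \<le> 0"
    by (rule midpoint_affine_le_0[OF \<open>p < q\<close> gc g0 gmid \<open>t \<in> {p..q}\<close>])
  moreover have "- g t \<le> 0"
    by (rule midpoint_affine_le_0[OF \<open>p < q\<close> continuous_on_minus[OF gc] _ _ _ \<open>t \<in> {p..q}\<close>])
      (use g0 gmid in auto)
  ultimately show ?thesis unfolding g_def c_def by linarith
qed

lemma midpoint_affine_imp_affine:
  fixes f :: "real \<Rightarrow> real"
  assumes S: "is_interval S" and cont: "continuous_on S f"
    and mid: "\<And>a b. a \<in> S \<Longrightarrow> b \<in> S \<Longrightarrow> a < b \<Longrightarrow> f ((a + b) / 2) = (f a + f b) / 2"
  shows "\<exists>A B. \<forall>t\<in>S. f t = A + B * t"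
proof (cases "\<exists>p\<in>S. \<exists>q\<in>S. p < q")
  case False
  have "t = s" if "s \<in> S" "t \<in> S" for s t
  proof (rule ccontr)
    assume "t \<noteq> s"
    then have "s < t \<or> t < s" by linarith
    with False that show False by blast
  qed
  then have "\<forall>t\<in>S. f t = f s + 0 * t" if "s \<in> S" for s
    using that by auto
  then show ?thesis by (cases "S = {}") blast+
next
  case True
  then obtain p q where pq: "p \<in> S" "q \<in> S" "p < q" by blast
  define B where "B = (f q - f p) / (q - p)"
  have "f t = f p + B * (t - p)" if "t \<in> S" for t
  proof -
    define p' q' where "p' = min p t" and "q' = max q t"
    have "p' \<in> S" "q' \<in> S" using pq that by (simp_all add: p'_def q'_def min_def max_def)
    then have sub: "{p'..q'} \<subseteq> S" using mem_is_interval_1_I[OF S \<open>p' \<in> S\<close> \<open>q' \<in> S\<close>] by auto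
    have "p' < q'" using pq by (auto simp: p'_def q'_def)
    define s where "s = (f q' - f p') / (q' - p')"
    have mid': "f ((a + b) / 2) = (f a + f b) / 2" if "a \<in> {p'..q'}" "b \<in> {p'..q'}" "a < b" for a b
      using mid[OF subsetD[OF sub that(1)] subsetD[OF sub that(2)] that(3)] .
    have chord: "f z = f p' + s * (z - p')" if "z \<in> {p'..q'}" for z
      unfolding s_def
      by (rule midpoint_affine_on_Icc) (use \<open>p' < q'\<close> continuous_on_subset[OF cont sub] mid' that in auto)
    have "p \<in> {p'..q'}" "q \<in> {p'..q'}" "t \<in> {p'..q'}" using pq by (auto simp: p'_def q'_def)
    from chord[OF this(1)] chord[OF this(2)] chord[OF this(3)]
    have "f q - f p = s * (q - p)" "f t = f p + s * (t - p)" by (simp_all add: algebra_simps)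
    with \<open>p < q\<close> show ?thesis unfolding B_def by simp
  qed
  then show ?thesis by (intro exI[of _ "f p - B * p"] exI[of _ B]) (auto simp: algebra_simps)
qed

lemma affine_if_increments_depend_on_gap:
  fixes f g :: "real \<Rightarrow> real"
  assumes L: "is_interval L" and cont: "continuous_on L f"
    and gap: "\<And>s t. s \<in> L \<Longrightarrow> t \<in> L \<Longrightarrow> s < t \<Longrightarrow> f t - f s = g (t - s)"
  shows "\<exists>A B. \<forall>t\<in>L. f t = A + B * t"
proof (rule midpoint_affine_imp_affine[OF L cont])
  fix a b assume ab: "a \<in> L" "b \<in> L" "a < b"
  define m where "m = (a + b) / 2"
  have "m \<in> L" using mem_is_interval_1_I[OF L ab(1,2), of m] ab by (simp add: m_def)
  moreover have "a < m" "m < b" "m - a = b - m" using ab by (simp_all add: m_def field_simps)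
  ultimately have "f m - f a = f b - f m"
    using gap[of a m] gap[of m b] arg_cong[of "m - a" "b - m" g] ab by simp
  then show "f ((a + b) / 2) = (f a + f b) / 2" unfolding m_def by simp
qed

lemma mono_last_level_point:
  fixes f :: "real \<Rightarrow> real"
  assumes cont: "continuous_on {a..b} f"
    and mono: "\<And>s t. a \<le> s \<Longrightarrow> s \<le> t \<Longrightarrow> t \<le> b \<Longrightarrow> f s \<le> f t"
    and "a \<le> b" and "f a < f b"
  shows "\<exists>c\<in>{a..<b}. f c = f a \<and> (\<forall>t\<in>{c<..b}. f c < f t)"
proof -
  define Z where "Z = {t \<in> {a..b}. f t = f a}"
  have "closed Z" "Z \<noteq> {}" "bdd_above Z"
    using continuous_closed_preimage_constant[OF cont] \<open>a \<le> b\<close>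
    by (auto simp: Z_def intro: bdd_aboveI[of _ b])
  then have cZ: "Sup Z \<in> Z" and cmax: "\<And>z. z \<in> Z \<Longrightarrow> z \<le> Sup Z"
    by (auto intro: closed_contains_Sup cSup_upper)
  have "f (Sup Z) < f t" if "t \<in> {Sup Z<..b}" for t
  proof -
    have "t \<notin> Z" using cmax that by force
    with that cZ mono[of "Sup Z" t] show ?thesis unfolding Z_def by force
  qed
  moreover have "Sup Z \<noteq> b" using cZ \<open>f a < f b\<close> unfolding Z_def by auto
  ultimately show ?thesis using cZ unfolding Z_def by auto
qed

lemma mono_first_level_point:
  fixes f :: "real \<Rightarrow> real"
  assumes cont: "continuous_on {a..b} f"
    and mono: "\<And>s t. a \<le> s \<Longrightarrow> s \<le> t \<Longrightarrow> t \<le> b \<Longrightarrow> f s \<le> f t"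
    and "a \<le> b" and "f a < f b"
  shows "\<exists>c\<in>{a<..b}. f c = f b \<and> (\<forall>t\<in>{a..<c}. f t < f c)"
proof -
  define Z where "Z = {t \<in> {a..b}. f t = f b}"
  have "closed Z" "Z \<noteq> {}" "bdd_below Z"
    using continuous_closed_preimage_constant[OF cont] \<open>a \<le> b\<close>
    by (auto simp: Z_def intro: bdd_belowI[of _ a])
  then have cZ: "Inf Z \<in> Z" and cmin: "\<And>z. z \<in> Z \<Longrightarrow> Inf Z \<le> z"
    by (auto intro: closed_contains_Inf cInf_lower)
  have "f t < f (Inf Z)" if "t \<in> {a..<Inf Z}" for t
  proof -
    have "t \<notin> Z" using cmin that by force
    with that cZ mono[of t "Inf Z"] show ?thesis unfolding Z_def by force
  qed
  moreover have "Inf Z \<noteq> a" using cZ \<open>f a < f b\<close> unfolding Z_def by auto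
  ultimately show ?thesis using cZ unfolding Z_def by auto
qed

lemma continuous_on_eq_from_interior:
  fixes f g :: "'a::euclidean_space \<Rightarrow> 'b::real_normed_vector"
  assumes "convex T" and "interior T \<noteq> {}" and "continuous_on T f" and "continuous_on T g"
    and eq: "\<And>t. t \<in> interior T \<Longrightarrow> f t = g t" and "t \<in> T"
  shows "f t = g t"
proof -
  have "closedin (top_of_set T) {s \<in> T. f s - g s = 0}"
    by (intro continuous_closedin_preimage_constant continuous_intros assms)
  then obtain C where "closed C" and C: "{s \<in> T. f s - g s = 0} = T \<inter> C"
    by (auto simp: closedin_closed)
  have "interior T \<subseteq> C" using C eq interior_subset by fastforce
  then have "closure T \<subseteq> C"
    using closure_minimal[OF _ \<open>closed C\<close>] convex_closure_interior[OF assms(1,2)] by metis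
  then show ?thesis using C \<open>t \<in> T\<close> closure_subset by fastforce
qed

lemma affine_slope_pos:
  fixes f :: "real \<Rightarrow> real"
  assumes "\<forall>t\<in>S. f t = A + B * t" and "p \<in> S" "q \<in> S" "p < q" "f p < f q"
  shows "B > 0"
proof -
  have "B * (q - p) > 0" using assms by (simp add: algebra_simps)
  with \<open>p < q\<close> show ?thesis by (simp add: zero_less_mult_iff)
qed

lemma nonconstant_mono_imp_less:
  fixes f :: "real \<Rightarrow> real"
  assumes mono: "\<And>s t. s \<in> S \<Longrightarrow> t \<in> S \<Longrightarrow> s \<le> t \<Longrightarrow> f s \<le> f t"
    and "\<not> (\<exists>k. \<forall>t\<in>S. f t = k)"
  shows "\<exists>p\<in>S. \<exists>q\<in>S. p < q \<and> f p < f q"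
proof -
  obtain p q where pq: "p \<in> S" "q \<in> S" "f p \<noteq> f q" using assms(2) by blast
  show ?thesis
  proof (cases p q rule: linorder_cases)
    case less
    then have "f p < f q" using pq mono[of p q] by simp
    with less pq show ?thesis by blast
  next
    case greater
    then have "f q < f p" using pq mono[of q p] by simp
    with greater pq show ?thesis by blast
  qed (use pq in simp)
qed

lemma nonconstant_antimono_imp_less:
  fixes f :: "real \<Rightarrow> real"
  assumes antimono: "\<And>s t. s \<in> S \<Longrightarrow> t \<in> S \<Longrightarrow> s \<le> t \<Longrightarrow> f t \<le> f s"
    and nonconst: "\<not> (\<exists>k. \<forall>t\<in>S. f t = k)"
  shows "\<exists>p\<in>S. \<exists>q\<in>S. p < q \<and> f q < f p"
proof -
  have "\<not> (\<exists>k. \<forall>t\<in>S. - f t = k)"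
  proof
    assume "\<exists>k. \<forall>t\<in>S. - f t = k"
    then obtain k where "\<forall>t\<in>S. - f t = k" by blast
    then have "\<forall>t\<in>S. f t = - k" by auto
    with nonconst show False by blast
  qed
  with nonconstant_mono_imp_less[of S "\<lambda>t. - f t"] antimono show ?thesis by auto
qed

section \<open>The equation on an open interval\<close>

locale path_equation =
  fixes I :: "real set" and x y \<phi> :: "real \<Rightarrow> real"
  assumes open_I: "open I" and interval_I: "is_interval I"
    and x_mono: "\<And>s t. s \<in> I \<Longrightarrow> t \<in> I \<Longrightarrow> s \<le> t \<Longrightarrow> x s \<le> x t"
    and y_antimono: "\<And>s t. s \<in> I \<Longrightarrow> t \<in> I \<Longrightarrow> s \<le> t \<Longrightarrow> y t \<le> y s"
    and x_cont: "continuous_on I x" and y_cont: "continuous_on I y"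
    and x_pos: "\<And>t. t \<in> I \<Longrightarrow> x t > 0" and y_pos: "\<And>t. t \<in> I \<Longrightarrow> y t > 0"
    and equation: "\<And>s t. s \<in> I \<Longrightarrow> t \<in> I \<Longrightarrow> s < t \<Longrightarrow>
                     x s * y s + x t * y t - 2 * x s * y t = \<phi> (t - s)"
begin

lemma mem_between: "a \<in> I \<Longrightarrow> b \<in> I \<Longrightarrow> a \<le> c \<Longrightarrow> c \<le> b \<Longrightarrow> c \<in> I"
  using interval_I by (meson mem_is_interval_1_I)

lemma Icc_subset: "a \<in> I \<Longrightarrow> b \<in> I \<Longrightarrow> {a..b} \<subseteq> I"
  using mem_between[of a b] by auto

lemma nbhd_in_I: "t \<in> I \<Longrightarrow> \<exists>e>0. \<forall>z. \<bar>z - t\<bar> < e \<longrightarrow> z \<in> I"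
  using open_I open_real by blast

lemma exists_greater_in_I:
  assumes "a \<in> I" shows "\<exists>b\<in>I. a < b"
proof -
  obtain e where "e > 0" "\<forall>z. \<bar>z - a\<bar> < e \<longrightarrow> z \<in> I" using nbhd_in_I[OF assms] by blast
  then show ?thesis by (intro bexI[of _ "a + e / 2"]) auto
qed

lemma x_mono_between:
  assumes "a \<in> I" "b \<in> I" "a \<le> s" "s \<le> t" "t \<le> b"
  shows "x s \<le> x t"
  using x_mono[of s t] mem_between[OF assms(1,2)] assms(3-5) by (meson order_trans)

lemma y_antimono_between:
  assumes "a \<in> I" "b \<in> I" "a \<le> s" "s \<le> t" "t \<le> b"
  shows "y t \<le> y s"
  using y_antimono[of s t] mem_between[OF assms(1,2)] assms(3-5) by (meson order_trans)

lemma value_shift_invariant: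
  assumes "s \<in> I" "t \<in> I" "s < t" "s' \<in> I" "t' \<in> I" "s' < t'" "t - s = t' - s'"
  shows "x s * y s + x t * y t - 2 * x s * y t = x s' * y s' + x t' * y t' - 2 * x s' * y t'"
  using equation[of s t] equation[of s' t'] assms by simp

lemma increment_product:
  assumes "s \<in> I" "t \<in> I" "r \<in> I" "s < t" "t < r"
  shows "2 * ((x t - x s) * (y t - y r)) = \<phi> (t - s) + \<phi> (r - t) - \<phi> (r - s)"
  using equation[of s t] equation[of t r] equation[of s r] assms by (simp add: algebra_simps)

lemma increment_product_shift_invariant:
  assumes "s \<in> I" "t \<in> I" "r \<in> I" "s < t" "t < r"
    and "s' \<in> I" "t' \<in> I" "r' \<in> I" "s' < t'" "t' < r'"
    and "t - s = t' - s'" "r - t = r' - t'"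
  shows "(x t - x s) * (y t - y r) = (x t' - x s') * (y t' - y r')"
proof -
  have "\<phi> (r - s) = \<phi> (r' - s')" by (rule arg_cong[where f = \<phi>]) (use assms in linarith)
  then show ?thesis using increment_product[of s t r] increment_product[of s' t' r'] assms by simp
qed

lemma y_not_flat_between:
  assumes "t1 \<in> I" "t2 \<in> I" "t1 < t2" and "y t2 = y t1"
    and x_left: "\<forall>t\<in>I. t < t1 \<longrightarrow> x t < x t1"
    and y_right: "\<forall>t\<in>I. t2 < t \<longrightarrow> y t < y t2"
  shows False
proof -
  obtain e1 where e1: "e1 > 0" "\<forall>z. \<bar>z - t1\<bar> < e1 \<longrightarrow> z \<in> I" using nbhd_in_I[OF \<open>t1 \<in> I\<close>] by blast
  obtain e2 where e2: "e2 > 0" "\<forall>z. \<bar>z - t2\<bar> < e2 \<longrightarrow> z \<in> I" using nbhd_in_I[OF \<open>t2 \<in> I\<close>] by blast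
  define d where "d = min ((t2 - t1) / 2) (e2 / 4)"
  define u where "u = min d (e1 / 2)"
  have bounds: "d \<le> (t2 - t1) / 2" "d \<le> e2 / 4" "u \<le> d" "u \<le> e1 / 2"
    unfolding d_def u_def by (rule min.cobounded1 min.cobounded2)+
  have "d > 0" "u > 0" using assms e1 e2 by (simp_all add: d_def u_def)
  with bounds e1 e2 have d: "d > 0" "2 * d \<le> t2 - t1" "3 * d < e2" and u: "u > 0" "u \<le> d" "u < e1"
    by auto
  have "t2 + 3 * d \<in> I" "t1 - u \<in> I" using d u e1 e2 by auto
  with mem_between[OF \<open>t1 \<in> I\<close> this(1)] d u
  have pts: "t1 - u \<in> I" "t1 + d \<in> I" "t1 + 2 * d - u \<in> I" "t1 + 2 * d \<in> I"
    "t2 + d \<in> I" "t2 + 3 * d \<in> I"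
    by auto
  have flat: "y z = y t2" if "t1 \<le> z" "z \<le> t2" for z
  proof -
    have "z \<in> I" using mem_between[OF \<open>t1 \<in> I\<close> \<open>t2 \<in> I\<close>] that by blast
    then have "y z \<le> y t1" "y t2 \<le> y z"
      using y_antimono[of t1 z] y_antimono[of z t2] that \<open>t1 \<in> I\<close> \<open>t2 \<in> I\<close> by simp_all
    with \<open>y t2 = y t1\<close> show ?thesis by linarith
  qed
  text \<open>Shifting the triple \<open>(t1 - u, t1, t2 + d)\<close>, whose increment product is positive,
    by \<open>2 d\<close> shows that \<open>x\<close> increases on \<open>[t1 + d, t1 + 2 d]\<close>.\<close>
  have "(x t1 - x (t1 - u)) * (y t1 - y (t2 + d)) =
        (x (t1 + 2 * d) - x (t1 + 2 * d - u)) * (y (t1 + 2 * d) - y (t2 + 3 * d))"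
    by (rule increment_product_shift_invariant) (use pts \<open>t1 \<in> I\<close> \<open>t1 < t2\<close> d u in auto)
  moreover have "x (t1 - u) < x t1" "y (t2 + d) < y t1"
    using x_left y_right pts d u \<open>y t2 = y t1\<close> by auto
  then have "(x t1 - x (t1 - u)) * (y t1 - y (t2 + d)) > 0" by simp
  ultimately have "x (t1 + 2 * d - u) \<noteq> x (t1 + 2 * d)" by auto
  moreover have "x (t1 + d) \<le> x (t1 + 2 * d - u)" "x (t1 + 2 * d - u) \<le> x (t1 + 2 * d)"
    using x_mono pts d u by auto
  ultimately have x_inc: "x (t1 + d) < x (t1 + 2 * d)" by linarith
  text \<open>The triple \<open>(t1, t1 + d, t2)\<close> sees \<open>y\<close> flat, but its shift by \<open>d\<close> does not.\<close>
  have "(x (t1 + d) - x t1) * (y (t1 + d) - y t2) =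
        (x (t1 + 2 * d) - x (t1 + d)) * (y (t1 + 2 * d) - y (t2 + d))"
    by (rule increment_product_shift_invariant) (use pts \<open>t1 \<in> I\<close> \<open>t2 \<in> I\<close> d in auto)
  moreover have "y (t1 + d) = y t2" "y (t1 + 2 * d) = y t2"
    using flat[of "t1 + d"] flat[of "t1 + 2 * d"] d by simp_all
  moreover have "y (t2 + d) < y t2" using y_right pts d by simp
  ultimately show False using x_inc by simp
qed

lemma x_strict_up_to_first_level:
  assumes "s \<in> I" "t \<in> I" "s < t" "x s < x t"
  shows "\<exists>c\<in>I. c \<le> t \<and> x c = x t \<and> (\<forall>u\<in>I. u < c \<longrightarrow> x u < x c)"
proof -
  have "\<exists>c\<in>{s<..t}. x c = x t \<and> (\<forall>u\<in>{s..<c}. x u < x c)"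
    using assms Icc_subset[of s t]
    by (intro mono_first_level_point continuous_on_subset[OF x_cont])
      (auto intro: x_mono_between[OF \<open>s \<in> I\<close> \<open>t \<in> I\<close>])
  then obtain c where c: "s < c" "c \<le> t" "x c = x t" "\<forall>u\<in>{s..<c}. x u < x c" by auto
  have "c \<in> I" using mem_between[of s t c] assms c by simp
  moreover have "x u < x c" if "u \<in> I" "u < c" for u
  proof (cases "s \<le> u")
    case False
    then have "x u \<le> x s" using x_mono \<open>u \<in> I\<close> assms by simp
    with assms c show ?thesis by linarith
  qed (use c that in auto)
  ultimately show ?thesis using c(2,3) by blast
qed

lemma y_strict_from_last_level:
  assumes "t \<in> I" "r \<in> I" "t < r" "y r < y t"
  shows "\<exists>c\<in>I. t \<le> c \<and> c < r \<and> y c = y t \<and> (\<forall>u\<in>I. c < u \<longrightarrow> y u < y c)"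
proof -
  have "\<exists>c\<in>{t..<r}. - y c = - y t \<and> (\<forall>u\<in>{c<..r}. - y c < - y u)"
    using assms Icc_subset[of t r]
    by (intro mono_last_level_point continuous_on_subset[OF continuous_on_minus[OF y_cont]])
      (auto intro: y_antimono_between[OF \<open>t \<in> I\<close> \<open>r \<in> I\<close>])
  then obtain c where c: "t \<le> c" "c < r" "y c = y t" "\<forall>u\<in>{c<..r}. y u < y c" by auto
  have "c \<in> I" using mem_between[of t r c] assms c by simp
  moreover have "y u < y c" if "u \<in> I" "c < u" for u
  proof (cases "u \<le> r")
    case False
    then have "y u \<le> y r" using y_antimono \<open>u \<in> I\<close> assms by simp
    with assms c show ?thesis by linarith
  qed (use c that in auto)
  ultimately show ?thesis using c(1-3) by blast
qed

lemma pivot_exists: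
  assumes "s \<in> I" "t \<in> I" "r \<in> I" "s < t" "t < r" "x s < x t" "y r < y t"
  shows "\<exists>c\<in>I. (\<forall>u\<in>I. u < c \<longrightarrow> x u < x c) \<and> (\<forall>u\<in>I. c < u \<longrightarrow> y u < y c)"
proof -
  obtain t1 where t1: "t1 \<in> I" "t1 \<le> t" and x_left: "\<forall>u\<in>I. u < t1 \<longrightarrow> x u < x t1"
    using x_strict_up_to_first_level[OF assms(1,2,4,6)] by blast
  have "y r < y t1" using y_antimono[of t1 t] t1 assms by simp
  then obtain t2 where t2: "t2 \<in> I" "t1 \<le> t2" "y t2 = y t1" and y_right: "\<forall>u\<in>I. t2 < u \<longrightarrow> y u < y t2"
    using y_strict_from_last_level[OF t1(1) assms(3)] t1(2) assms(5) by auto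
  have "t2 = t1"
  proof (rule ccontr)
    assume "t2 \<noteq> t1"
    with t2 have "t1 < t2" by simp
    from y_not_flat_between[OF t1(1) t2(1) this t2(3) x_left y_right] show False .
  qed
  with t1(1) x_left y_right show ?thesis by auto
qed

text \<open>Around a pivot every increment product of small gaps is positive; shifting such a triple
  to end at any point \<open>b\<close> (or start at any point \<open>a\<close>) shows that \<open>x\<close> (resp. \<open>y\<close>) moves there.\<close>
lemma strict_mono_from_pivot:
  assumes "c \<in> I" and x_left: "\<forall>t\<in>I. t < c \<longrightarrow> x t < x c" and y_right: "\<forall>t\<in>I. c < t \<longrightarrow> y t < y c"
    and "a \<in> I" "b \<in> I" "a < b"
  shows "x a < x b \<and> y b < y a"
proof -
  obtain ec where ec: "ec > 0" "\<forall>z. \<bar>z - c\<bar> < ec \<longrightarrow> z \<in> I" using nbhd_in_I[OF \<open>c \<in> I\<close>] by blast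
  obtain ea where ea: "ea > 0" "\<forall>z. \<bar>z - a\<bar> < ea \<longrightarrow> z \<in> I" using nbhd_in_I[OF \<open>a \<in> I\<close>] by blast
  obtain eb where eb: "eb > 0" "\<forall>z. \<bar>z - b\<bar> < eb \<longrightarrow> z \<in> I" using nbhd_in_I[OF \<open>b \<in> I\<close>] by blast
  define u where "u = min (min (b - a) (ec / 2)) (min (ea / 2) (eb / 2))"
  have u: "u > 0" "u \<le> b - a" "u < ec" "u < ea" and v: "u < eb"
    using ec ea eb \<open>a < b\<close> unfolding u_def by auto
  have pts: "c - u \<in> I" "c + u \<in> I" "a - u \<in> I" "b + u \<in> I"
    using ec(2)[rule_format, of "c - u"] ec(2)[rule_format, of "c + u"]
      ea(2)[rule_format, of "a - u"] eb(2)[rule_format, of "b + u"] u v by auto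
  have pts': "a + u \<in> I" "b - u \<in> I" using mem_between[OF \<open>a \<in> I\<close> \<open>b \<in> I\<close>] u by auto
  have pos: "(x c - x (c - u)) * (y c - y (c + u)) > 0"
    using x_left y_right pts u by simp
  have "(x c - x (c - u)) * (y c - y (c + u)) = (x b - x (b - u)) * (y b - y (b + u))"
    by (rule increment_product_shift_invariant) (use pts pts' u \<open>c \<in> I\<close> \<open>b \<in> I\<close> in auto)
  with pos have "x (b - u) \<noteq> x b" by auto
  moreover have "x a \<le> x (b - u)" "x (b - u) \<le> x b" using x_mono \<open>a \<in> I\<close> \<open>b \<in> I\<close> pts' u by auto
  ultimately have "x a < x b" by linarith
  have "(x c - x (c - u)) * (y c - y (c + u)) = (x a - x (a - u)) * (y a - y (a + u))"
    by (rule increment_product_shift_invariant) (use pts pts' u \<open>c \<in> I\<close> \<open>a \<in> I\<close> in auto)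
  with pos have "y (a + u) \<noteq> y a" by auto
  moreover have "y b \<le> y (a + u)" "y (a + u) \<le> y a" using y_antimono \<open>a \<in> I\<close> \<open>b \<in> I\<close> pts' u by auto
  ultimately show ?thesis using \<open>x a < x b\<close> by linarith
qed

lemma x_constant_case:
  assumes x_const: "\<forall>t\<in>I. x t = k" and y_nonconst: "\<not> (\<exists>k. \<forall>t\<in>I. y t = k)"
  shows "\<exists>a b c. a > 0 \<and> c > 0 \<and> (\<forall>t\<in>I. x t = a \<and> y t = b - c * t)"
proof -
  obtain p q where pq: "p \<in> I" "q \<in> I" "p < q" "- y p < - y q"
    using nonconstant_antimono_imp_less[of I y] y_antimono y_nonconst by auto
  have "k > 0" using x_pos[OF \<open>p \<in> I\<close>] x_const pq by simp
  have "\<exists>A B. \<forall>t\<in>I. - y t = A + B * t"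
  proof (rule affine_if_increments_depend_on_gap[OF interval_I continuous_on_minus[OF y_cont]])
    fix s t assume "s \<in> I" "t \<in> I" "s < t"
    with equation[of s t] x_const \<open>k > 0\<close> show "- y t - - y s = \<phi> (t - s) / k"
      by (simp add: field_simps)
  qed
  then obtain A B where AB: "\<forall>t\<in>I. - y t = A + B * t" by blast
  have "B > 0" using affine_slope_pos[OF AB pq] .
  with AB x_const \<open>k > 0\<close> show ?thesis
    by (intro exI[of _ k] exI[of _ "- A"] exI[of _ B]) (auto simp: algebra_simps)
qed

lemma y_constant_case:
  assumes y_const: "\<forall>t\<in>I. y t = k" and x_nonconst: "\<not> (\<exists>k. \<forall>t\<in>I. x t = k)"
  shows "\<exists>a b c. a > 0 \<and> c > 0 \<and> (\<forall>t\<in>I. x t = b + c * t \<and> y t = a)"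
proof -
  obtain p q where pq: "p \<in> I" "q \<in> I" "p < q" "x p < x q"
    using nonconstant_mono_imp_less[of I x] x_mono x_nonconst by blast
  have "k > 0" using y_pos[OF \<open>p \<in> I\<close>] y_const pq by simp
  have "\<exists>A B. \<forall>t\<in>I. x t = A + B * t"
  proof (rule affine_if_increments_depend_on_gap[OF interval_I x_cont])
    fix s t assume "s \<in> I" "t \<in> I" "s < t"
    with equation[of s t] y_const \<open>k > 0\<close> show "x t - x s = \<phi> (t - s) / k"
      by (simp add: field_simps)
  qed
  then obtain A B where AB: "\<forall>t\<in>I. x t = A + B * t" by blast
  have "B > 0" using affine_slope_pos[OF AB pq] .
  with AB y_const \<open>k > 0\<close> show ?thesis
    by (intro exI[of _ k] exI[of _ A] exI[of _ B]) auto
qed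

lemma x_flat_up_to_last_level:
  assumes "p \<in> I" "q \<in> I" "x p < x q" and x_left: "\<forall>t\<in>I. t \<le> p \<longrightarrow> x t = x p"
  shows "\<exists>c\<in>I. p \<le> c \<and> (\<forall>t\<in>I. t \<le> c \<longrightarrow> x t = x c) \<and> (\<forall>t. c < t \<and> t \<le> q \<longrightarrow> x c < x t)"
proof -
  have "p < q" using x_left[rule_format, OF \<open>q \<in> I\<close>] \<open>x p < x q\<close> by force
  then have "\<exists>c\<in>{p..<q}. x c = x p \<and> (\<forall>t\<in>{c<..q}. x c < x t)"
    using assms(1-3) Icc_subset[of p q]
    by (intro mono_last_level_point continuous_on_subset[OF x_cont])
      (auto intro: x_mono_between[OF \<open>p \<in> I\<close> \<open>q \<in> I\<close>])
  then obtain c where c: "p \<le> c" "c < q" "x c = x p" "\<forall>t\<in>{c<..q}. x c < x t" by auto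
  have "c \<in> I" using mem_between[OF \<open>p \<in> I\<close> \<open>q \<in> I\<close>, of c] c by simp
  have x_c: "x t = x c" if "t \<in> I" "t \<le> c" for t
  proof (cases "t \<le> p")
    case True
    then show ?thesis using x_left[rule_format, OF that(1) True] c(3) by simp
  next
    case False
    then have "x p \<le> x t" "x t \<le> x c" using x_mono[of p t] x_mono[of t c] \<open>p \<in> I\<close> \<open>c \<in> I\<close> that by auto
    with c(3) show ?thesis by simp
  qed
  show ?thesis
    by (intro bexI[of _ c] conjI allI ballI impI x_c) (use \<open>c \<in> I\<close> c(1,4) in auto)
qed

lemma y_flat_from_first_level:
  assumes "p \<in> I" "q \<in> I" "y q < y p" and y_right: "\<forall>t\<in>I. q \<le> t \<longrightarrow> y t = y q"
  shows "\<exists>c\<in>I. c \<le> q \<and> (\<forall>t\<in>I. c \<le> t \<longrightarrow> y t = y c) \<and> (\<forall>t. p \<le> t \<and> t < c \<longrightarrow> y c < y t)"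
proof -
  have "p < q" using y_right[rule_format, OF \<open>p \<in> I\<close>] \<open>y q < y p\<close> by force
  then have "\<exists>c\<in>{p<..q}. - y c = - y q \<and> (\<forall>t\<in>{p..<c}. - y t < - y c)"
    using assms(1-3) Icc_subset[of p q]
    by (intro mono_first_level_point continuous_on_subset[OF continuous_on_minus[OF y_cont]])
      (auto intro: y_antimono_between[OF \<open>p \<in> I\<close> \<open>q \<in> I\<close>])
  then obtain c where c: "p < c" "c \<le> q" "y c = y q" "\<forall>t\<in>{p..<c}. y c < y t" by auto
  have "c \<in> I" using mem_between[OF \<open>p \<in> I\<close> \<open>q \<in> I\<close>, of c] c by simp
  have y_c: "y t = y c" if "t \<in> I" "c \<le> t" for t
  proof (cases "q \<le> t")
    case True
    then show ?thesis using y_right[rule_format, OF that(1) True] c(3) by simp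
  next
    case False
    then have "y q \<le> y t" "y t \<le> y c" using y_antimono[of t q] y_antimono[of c t] \<open>q \<in> I\<close> \<open>c \<in> I\<close> that
      by auto
    with c(3) show ?thesis by simp
  qed
  show ?thesis
    by (intro bexI[of _ c] conjI allI ballI impI y_c) (use \<open>c \<in> I\<close> c(2,4) in auto)
qed

text \<open>Without a triple on which \<open>x\<close> rises and then \<open>y\<close> drops, the last point where \<open>x\<close> still has
  its initial value cannot lie before the first point where \<open>y\<close> has reached its final value.\<close>
lemma kink_point_exists:
  assumes N: "\<And>s t r. s \<in> I \<Longrightarrow> t \<in> I \<Longrightarrow> r \<in> I \<Longrightarrow> s < t \<Longrightarrow> t < r \<Longrightarrow> x s = x t \<or> y t = y r"
    and x_nonconst: "\<not> (\<exists>k. \<forall>t\<in>I. x t = k)" and y_nonconst: "\<not> (\<exists>k. \<forall>t\<in>I. y t = k)"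
  shows "\<exists>s0\<in>I. (\<forall>t\<in>I. t \<le> s0 \<longrightarrow> x t = x s0) \<and> (\<forall>t\<in>I. s0 \<le> t \<longrightarrow> y t = y s0)"
proof -
  obtain p q where pq: "p \<in> I" "q \<in> I" "p < q" "y q < y p"
    using nonconstant_antimono_imp_less[of I y] y_antimono y_nonconst by blast
  obtain p' q' where pq': "p' \<in> I" "q' \<in> I" "p' < q'" "x p' < x q'"
    using nonconstant_mono_imp_less[of I x] x_mono x_nonconst by blast
  have x_left: "\<forall>t\<in>I. t \<le> p \<longrightarrow> x t = x p"
  proof (intro ballI impI)
    fix t assume "t \<in> I" "t \<le> p"
    with N[of t p q] pq show "x t = x p" by (cases "t = p") auto
  qed
  have y_right: "\<forall>t\<in>I. q' \<le> t \<longrightarrow> y t = y q'"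
  proof (intro ballI impI)
    fix t assume "t \<in> I" "q' \<le> t"
    with N[of p' q' t] pq' show "y t = y q'" by (cases "t = q'") auto
  qed
  have "x p < x q'"
  proof (cases "p' \<le> p")
    case True
    then show ?thesis using x_left[rule_format, OF pq'(1)] pq'(4) by simp
  next
    case False
    then show ?thesis using x_mono[of p p'] pq(1) pq'(1,4) by simp
  qed
  then obtain c1 where c1: "c1 \<in> I" "p \<le> c1" "\<forall>t\<in>I. t \<le> c1 \<longrightarrow> x t = x c1"
    "\<forall>t. c1 < t \<and> t \<le> q' \<longrightarrow> x c1 < x t"
    using x_flat_up_to_last_level[OF pq(1) pq'(2) _ x_left] by blast
  have "y q' < y p"
  proof (cases "q \<le> q'")
    case True
    then show ?thesis using y_antimono[of q q'] pq(2,4) pq'(2) by simp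
  next
    case False
    then show ?thesis using y_right[rule_format, OF pq(2)] pq(4) by simp
  qed
  then obtain c2 where c2: "c2 \<in> I" "c2 \<le> q'" "\<forall>t\<in>I. c2 \<le> t \<longrightarrow> y t = y c2"
    "\<forall>t. p \<le> t \<and> t < c2 \<longrightarrow> y c2 < y t"
    using y_flat_from_first_level[OF pq(1) pq'(2) _ y_right] by blast
  have "c2 \<le> c1"
  proof (rule ccontr)
    assume "\<not> c2 \<le> c1"
    define m where "m = (c1 + c2) / 2"
    have "c1 < m" "m < c2" using \<open>\<not> c2 \<le> c1\<close> by (simp_all add: m_def)
    moreover have "m \<in> I" using mem_between[OF c1(1) c2(1), of m] calculation by simp
    ultimately have "x c1 < x m" "y c2 < y m" using c1(2,4) c2(2,4) by auto
    with N[OF c1(1) \<open>m \<in> I\<close> c2(1) \<open>c1 < m\<close> \<open>m < c2\<close>] show False by simp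
  qed
  have "\<forall>t\<in>I. c1 \<le> t \<longrightarrow> y t = y c1"
  proof (intro ballI impI)
    fix t assume "t \<in> I" "c1 \<le> t"
    with c2(3)[rule_format, OF \<open>t \<in> I\<close>] c2(3)[rule_format, OF c1(1)] \<open>c2 \<le> c1\<close>
    show "y t = y c1" by simp
  qed
  with c1(1,3) show ?thesis by (intro bexI[of _ c1] conjI)
qed

lemma kink_affine_pieces:
  assumes "s0 \<in> I" and x_flat: "\<forall>t\<in>I. t \<le> s0 \<longrightarrow> x t = x s0"
    and y_flat: "\<forall>t\<in>I. s0 \<le> t \<longrightarrow> y t = y s0"
  shows "\<exists>c d. \<forall>t\<in>I. (t \<le> s0 \<longrightarrow> y t = y s0 - c * (t - s0)) \<and> (s0 \<le> t \<longrightarrow> x t = x s0 + d * (t - s0))"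
proof -
  define L R where "L = I \<inter> {..s0}" and "R = I \<inter> {s0..}"
  have "is_interval L" "is_interval R"
    using interval_I by (simp_all add: L_def R_def is_interval_Int is_interval_ic is_interval_ci)
  have "continuous_on L (\<lambda>t. - y t)" "continuous_on R x"
    using continuous_on_subset[OF y_cont] continuous_on_subset[OF x_cont]
    by (auto simp: L_def R_def intro!: continuous_intros)
  have "x s0 > 0" "y s0 > 0" using x_pos y_pos \<open>s0 \<in> I\<close> by auto
  have "\<exists>A B. \<forall>t\<in>L. - y t = A + B * t"
  proof (rule affine_if_increments_depend_on_gap[OF \<open>is_interval L\<close> \<open>continuous_on L (\<lambda>t. - y t)\<close>])
    fix s t assume "s \<in> L" "t \<in> L" "s < t"
    then have "x s = x s0" "x t = x s0"
      using x_flat[rule_format, of s] x_flat[rule_format, of t] by (simp_all add: L_def)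
    with equation[of s t] \<open>s \<in> L\<close> \<open>t \<in> L\<close> \<open>s < t\<close> \<open>x s0 > 0\<close>
    show "- y t - - y s = \<phi> (t - s) / x s0"
      by (auto simp: L_def field_simps)
  qed
  then obtain A B where AB: "\<forall>t\<in>L. - y t = A + B * t" by blast
  have "\<exists>A B. \<forall>t\<in>R. x t = A + B * t"
  proof (rule affine_if_increments_depend_on_gap[OF \<open>is_interval R\<close> \<open>continuous_on R x\<close>])
    fix s t assume "s \<in> R" "t \<in> R" "s < t"
    then have "y s = y s0" "y t = y s0"
      using y_flat[rule_format, of s] y_flat[rule_format, of t] by (simp_all add: R_def)
    with equation[of s t] \<open>s \<in> R\<close> \<open>t \<in> R\<close> \<open>s < t\<close> \<open>y s0 > 0\<close>
    show "x t - x s = \<phi> (t - s) / y s0"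
      by (auto simp: R_def field_simps)
  qed
  then obtain A' B' where AB': "\<forall>t\<in>R. x t = A' + B' * t" by blast
  have "s0 \<in> L" "s0 \<in> R" using \<open>s0 \<in> I\<close> by (simp_all add: L_def R_def)
  have "y t = y s0 - B * (t - s0)" if "t \<in> I" "t \<le> s0" for t
    using AB[rule_format, of t] AB[rule_format, OF \<open>s0 \<in> L\<close>] that
    by (simp add: L_def algebra_simps)
  moreover have "x t = x s0 + B' * (t - s0)" if "t \<in> I" "s0 \<le> t" for t
    using AB'[rule_format, of t] AB'[rule_format, OF \<open>s0 \<in> R\<close>] that
    by (simp add: R_def algebra_simps)
  ultimately show ?thesis by blast
qed

text \<open>Comparing the equation on the pairs \<open>(s0 - h, s0)\<close> and \<open>(s0, s0 + h)\<close> gives \<open>a c h = b d h\<close>.\<close>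
lemma kink_case:
  assumes "s0 \<in> I" and x_flat: "\<forall>t\<in>I. t \<le> s0 \<longrightarrow> x t = x s0"
    and y_flat: "\<forall>t\<in>I. s0 \<le> t \<longrightarrow> y t = y s0"
    and x_nonconst: "\<not> (\<exists>k. \<forall>t\<in>I. x t = k)" and y_nonconst: "\<not> (\<exists>k. \<forall>t\<in>I. y t = k)"
  shows "\<exists>a b c d. a > 0 \<and> b > 0 \<and> c > 0 \<and> d > 0 \<and> a * c = b * d \<and>
           (\<forall>t\<in>I. x t = a + d * (t - s0) * (if t > s0 then 1 else 0) \<and>
                    y t = b - c * (t - s0) * (if t \<le> s0 then 1 else 0))"
proof -
  obtain c d where cd: "\<forall>t\<in>I. (t \<le> s0 \<longrightarrow> y t = y s0 - c * (t - s0)) \<and> (s0 \<le> t \<longrightarrow> x t = x s0 + d * (t - s0))"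
    using kink_affine_pieces[OF assms(1-3)] by blast
  obtain t where t: "t \<in> I" "y t \<noteq> y s0" using y_nonconst by blast
  then have "t < s0" using y_flat[rule_format, OF t(1)] by force
  then have "y s0 < y t" using y_antimono[of t s0] t \<open>s0 \<in> I\<close> by (simp add: order_less_le)
  moreover have "y t - y s0 = c * (s0 - t)"
    using cd[rule_format, OF \<open>t \<in> I\<close>] \<open>t < s0\<close> by (simp add: algebra_simps)
  ultimately have "c * (s0 - t) > 0" by linarith
  with \<open>t < s0\<close> have "c > 0" by (simp add: zero_less_mult_iff)
  obtain t' where t': "t' \<in> I" "x t' \<noteq> x s0" using x_nonconst by blast
  then have "s0 < t'" using x_flat[rule_format, OF t'(1)] by force
  then have "x s0 < x t'" using x_mono[of s0 t'] t' \<open>s0 \<in> I\<close> by (simp add: order_less_le)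
  moreover have "x t' - x s0 = d * (t' - s0)"
    using cd[rule_format, OF \<open>t' \<in> I\<close>] \<open>s0 < t'\<close> by (simp add: algebra_simps)
  ultimately have "d * (t' - s0) > 0" by linarith
  with \<open>s0 < t'\<close> have "d > 0" by (simp add: zero_less_mult_iff)
  obtain e where e: "e > 0" "\<forall>z. \<bar>z - s0\<bar> < e \<longrightarrow> z \<in> I" using nbhd_in_I[OF \<open>s0 \<in> I\<close>] by blast
  define h where "h = e / 2"
  have h: "h > 0" "s0 - h \<in> I" "s0 + h \<in> I" using e by (auto simp: h_def)
  have "x (s0 - h) * y (s0 - h) + x s0 * y s0 - 2 * x (s0 - h) * y s0 =
        x s0 * y s0 + x (s0 + h) * y (s0 + h) - 2 * x s0 * y (s0 + h)"
    by (rule value_shift_invariant) (use h \<open>s0 \<in> I\<close> in auto)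
  moreover have "x (s0 - h) = x s0" "y (s0 - h) = y s0 + c * h"
    "x (s0 + h) = x s0 + d * h" "y (s0 + h) = y s0"
    using cd[rule_format, OF h(2)] cd[rule_format, OF h(3)] x_flat[rule_format, OF h(2)]
      y_flat[rule_format, OF h(3)] h(1)
    by (simp_all add: algebra_simps)
  ultimately have "(x s0 * c - y s0 * d) * h = 0" by (simp add: algebra_simps)
  with h have "x s0 * c = y s0 * d" by simp
  moreover have "\<forall>t\<in>I. x t = x s0 + d * (t - s0) * (if t > s0 then 1 else 0) \<and>
                 y t = y s0 - c * (t - s0) * (if t \<le> s0 then 1 else 0)"
  proof
    fix t assume "t \<in> I"
    then show "x t = x s0 + d * (t - s0) * (if t > s0 then 1 else 0) \<and>
               y t = y s0 - c * (t - s0) * (if t \<le> s0 then 1 else 0)"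
      using cd[rule_format, OF \<open>t \<in> I\<close>] x_flat[rule_format, OF \<open>t \<in> I\<close>]
        y_flat[rule_format, OF \<open>t \<in> I\<close>] by auto
  qed
  moreover have "x s0 > 0" "y s0 > 0" using x_pos y_pos \<open>s0 \<in> I\<close> by auto
  ultimately show ?thesis using \<open>c > 0\<close> \<open>d > 0\<close> by blast
qed

end

section \<open>Strictly monotone solutions\<close>

locale strict_path_equation = path_equation +
  assumes x_strict: "\<And>s t. s \<in> I \<Longrightarrow> t \<in> I \<Longrightarrow> s < t \<Longrightarrow> x s < x t"
    and y_strict: "\<And>s t. s \<in> I \<Longrightarrow> t \<in> I \<Longrightarrow> s < t \<Longrightarrow> y t < y s"

text \<open>Translating triples by \<open>w\<close> preserves increment products, so all increments of \<open>x\<close> inside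
  the window grow by one common factor \<open>scale\<close> under the translation, and those of \<open>y\<close> shrink by it.\<close>
locale shift_window = strict_path_equation +
  fixes w t0 :: real
  assumes w_pos: "w > 0" and t0_in: "t0 \<in> I" and t0_2w_in: "t0 + 2 * w \<in> I"
begin

definition in_window :: "real \<Rightarrow> bool" where
  "in_window t \<longleftrightarrow> t \<in> I \<and> t + w \<in> I"

lemma t0_w_in: "t0 + w \<in> I"
  using mem_between[OF t0_in t0_2w_in, of "t0 + w"] w_pos by simp

lemma in_window_t0: "in_window t0"
  using t0_in t0_w_in by (simp add: in_window_def)

lemma in_window_t0_w: "in_window (t0 + w)"
  using t0_w_in t0_2w_in by (simp add: in_window_def algebra_simps)

lemma in_window_right:
  assumes "in_window t" shows "\<exists>r. t < r \<and> in_window r"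
proof -
  have "t \<in> I" "t + w \<in> I" using assms by (auto simp: in_window_def)
  obtain e where e: "e > 0" "\<forall>z. \<bar>z - (t + w)\<bar> < e \<longrightarrow> z \<in> I" using nbhd_in_I[OF \<open>t + w \<in> I\<close>] by blast
  define r where "r = t + min (e / 2) w"
  have "t < r" "r \<le> t + w" "r + w \<in> I" using e w_pos by (auto simp: r_def)
  moreover have "r \<in> I" using mem_between[OF \<open>t \<in> I\<close> \<open>t + w \<in> I\<close>, of r] calculation by simp
  ultimately show ?thesis by (auto simp: in_window_def)
qed

lemma in_window_left:
  assumes "in_window t" shows "\<exists>s. s < t \<and> in_window s"
proof -
  have "t \<in> I" "t + w \<in> I" using assms by (auto simp: in_window_def)
  obtain e where e: "e > 0" "\<forall>z. \<bar>z - t\<bar> < e \<longrightarrow> z \<in> I" using nbhd_in_I[OF \<open>t \<in> I\<close>] by blast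
  define s where "s = t - min (e / 2) w"
  have "s < t" "t \<le> s + w" "s + w \<le> t + w" "s \<in> I" using e w_pos by (auto simp: s_def)
  moreover have "s + w \<in> I" using mem_between[OF \<open>t \<in> I\<close> \<open>t + w \<in> I\<close>, of "s + w"] calculation by simp
  ultimately show ?thesis by (auto simp: in_window_def)
qed

lemma shift_ratio_same_end:
  assumes "in_window s" "in_window s'" "in_window t" "s < t" "s' < t"
  shows "(x (t + w) - x (s + w)) * (x t - x s') = (x (t + w) - x (s' + w)) * (x t - x s)"
proof -
  obtain r where r: "t < r" "in_window r" using in_window_right assms(3) by blast
  have I: "s \<in> I" "s' \<in> I" "t \<in> I" "r \<in> I" "s + w \<in> I" "s' + w \<in> I" "t + w \<in> I" "r + w \<in> I"
    using assms r by (auto simp: in_window_def)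
  have "(x t - x s) * (y t - y r) = (x (t + w) - x (s + w)) * (y (t + w) - y (r + w))"
    by (rule increment_product_shift_invariant) (use I assms r in auto)
  moreover have "(x t - x s') * (y t - y r) = (x (t + w) - x (s' + w)) * (y (t + w) - y (r + w))"
    by (rule increment_product_shift_invariant) (use I assms r in auto)
  ultimately have "((x (t + w) - x (s + w)) * (x t - x s') - (x (t + w) - x (s' + w)) * (x t - x s))
      * (y (t + w) - y (r + w)) = 0"
    by algebra
  moreover have "y (t + w) - y (r + w) > 0" using y_strict I r by auto
  ultimately show ?thesis by simp
qed

lemma shift_ratio_le:
  assumes "in_window s" "in_window t" "in_window s'" "in_window t'" "s < t" "s' < t'" "t \<le> t'"
  shows "(x (t + w) - x (s + w)) * (x t' - x s') = (x (t' + w) - x (s' + w)) * (x t - x s)"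
proof (cases "t = t'")
  case True
  then show ?thesis using shift_ratio_same_end[of s s' t] assms by (simp add: algebra_simps)
next
  case False
  then have "t < t'" using assms by simp
  have "(x (t' + w) - x (s + w)) * (x t' - x t) = (x (t' + w) - x (t + w)) * (x t' - x s)"
    using shift_ratio_same_end[of s t t'] assms \<open>t < t'\<close> by simp
  then have h1: "(x (t + w) - x (s + w)) * (x t' - x t) = (x (t' + w) - x (t + w)) * (x t - x s)"
    by algebra
  have h2: "(x (t' + w) - x (t + w)) * (x t' - x s') = (x (t' + w) - x (s' + w)) * (x t' - x t)"
    using shift_ratio_same_end[of t s' t'] assms \<open>t < t'\<close> by simp
  have "((x (t + w) - x (s + w)) * (x t' - x s') - (x (t' + w) - x (s' + w)) * (x t - x s))
      * (x t' - x t) = 0"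
    using h1 h2 by algebra
  moreover have "x t' - x t > 0" using x_strict assms \<open>t < t'\<close> by (simp add: in_window_def)
  ultimately show ?thesis by simp
qed

lemma shift_ratio:
  assumes "in_window s" "in_window t" "in_window s'" "in_window t'" "s < t" "s' < t'"
  shows "(x (t + w) - x (s + w)) * (x t' - x s') = (x (t' + w) - x (s' + w)) * (x t - x s)"
  using shift_ratio_le[of s t s' t'] shift_ratio_le[of s' t' s t] assms
  by (cases "t \<le> t'") (auto simp: algebra_simps)

definition scale :: real where
  "scale = (x (t0 + w + w) - x (t0 + w)) / (x (t0 + w) - x t0)"

definition x_offset :: real where
  "x_offset = x (t0 + w) - scale * x t0"

definition y_offset :: real where
  "y_offset = y (t0 + w) - y t0 / scale"

lemma x_increment_t0_pos: "x (t0 + w) - x t0 > 0"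
  using x_strict t0_in t0_w_in w_pos by simp

lemma scale_pos: "scale > 0"
proof -
  have "t0 + w + w \<in> I" using t0_2w_in by (simp add: algebra_simps)
  then have "x (t0 + w + w) - x (t0 + w) > 0" using x_strict t0_w_in w_pos by simp
  with x_increment_t0_pos show ?thesis unfolding scale_def by simp
qed

lemma x_increment_shift:
  assumes "in_window s" "in_window t" "s < t"
  shows "x (t + w) - x (s + w) = scale * (x t - x s)"
proof -
  have "(x (t + w) - x (s + w)) * (x (t0 + w) - x t0) = (x (t0 + w + w) - x (t0 + w)) * (x t - x s)"
    using shift_ratio[of s t t0 "t0 + w"] assms in_window_t0 in_window_t0_w w_pos by simp
  with x_increment_t0_pos show ?thesis unfolding scale_def by (simp add: field_simps)
qed

lemma x_shift:
  assumes "in_window t" shows "x (t + w) = scale * x t + x_offset"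
  using x_increment_shift[of t t0] x_increment_shift[of t0 t] assms in_window_t0
  by (cases t t0 rule: linorder_cases) (simp_all add: x_offset_def algebra_simps)

lemma y_increment_shift:
  assumes "in_window t" "in_window r" "t < r"
  shows "scale * (y (t + w) - y (r + w)) = y t - y r"
proof -
  obtain s where s: "s < t" "in_window s" using in_window_left assms by blast
  have I: "s \<in> I" "t \<in> I" "r \<in> I" "s + w \<in> I" "t + w \<in> I" "r + w \<in> I"
    using assms s by (auto simp: in_window_def)
  have "(x t - x s) * (y t - y r) = (x (t + w) - x (s + w)) * (y (t + w) - y (r + w))"
    by (rule increment_product_shift_invariant) (use I assms s in auto)
  also have "\<dots> = (x t - x s) * (scale * (y (t + w) - y (r + w)))"
    using x_increment_shift[of s t] s assms by simp
  finally show ?thesis using x_strict[of s t] I s by simp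
qed

lemma y_shift:
  assumes "in_window t" shows "scale * y (t + w) = y t + scale * y_offset"
  using y_increment_shift[of t t0] y_increment_shift[of t0 t] assms in_window_t0 scale_pos
  by (cases t t0 rule: linorder_cases) (simp_all add: y_offset_def algebra_simps)

text \<open>The equation is itself invariant under the translation; inserting the affine shift rules
  for \<open>x\<close> and \<open>y\<close> leaves this linear relation mem_between the increments.\<close>
lemma offsets_relation:
  assumes "in_window s" "in_window t" "s < t"
  shows "scale * scale * y_offset * (x t - x s) + x_offset * (y s - y t) = 0"
proof -
  have I: "s \<in> I" "t \<in> I" "s + w \<in> I" "t + w \<in> I" using assms by (auto simp: in_window_def)
  have "x (s + w) * y (s + w) + x (t + w) * y (t + w) - 2 * x (s + w) * y (t + w) =
        x s * y s + x t * y t - 2 * x s * y t"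
    by (rule value_shift_invariant) (use I assms in auto)
  with x_shift[OF assms(1)] x_shift[OF assms(2)] y_shift[OF assms(1)] y_shift[OF assms(2)] show ?thesis
    by algebra
qed

lemma multiplicative_shift_if_x_offset_zero:
  assumes "x_offset = 0"
  shows "\<forall>t. t \<in> I \<and> t + w \<in> I \<longrightarrow> x (t + w) = scale * x t \<and> y (t + w) = y t / scale"
proof -
  have "scale * scale * y_offset * (x (t0 + w) - x t0) = 0"
    using offsets_relation[OF in_window_t0 in_window_t0_w] assms w_pos by simp
  then have "y_offset = 0" using x_increment_t0_pos scale_pos by simp
  with x_shift y_shift assms scale_pos show ?thesis by (auto simp: in_window_def field_simps)
qed

lemma window_affine_relation:
  assumes "x_offset \<noteq> 0"
  obtains \<gamma> where "\<gamma> > 0"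
    and "\<And>s t. in_window s \<Longrightarrow> in_window t \<Longrightarrow> y s + \<gamma> * x s = y t + \<gamma> * x t"
proof -
  define \<gamma> where "\<gamma> = - (scale * scale * y_offset) / x_offset"
  have gap: "y s - y t = \<gamma> * (x t - x s)" if "in_window s" "in_window t" "s < t" for s t
    using offsets_relation[OF that] assms unfolding \<gamma>_def by (simp add: field_simps)
  have "y t0 - y (t0 + w) > 0" using y_strict t0_in t0_w_in w_pos by simp
  with gap[OF in_window_t0 in_window_t0_w] x_increment_t0_pos w_pos have "\<gamma> > 0"
    by (simp add: zero_less_mult_iff)
  moreover have "y s + \<gamma> * x s = y t + \<gamma> * x t" if "in_window s" "in_window t" for s t
    using gap[of s t] gap[of t s] that by (cases s t rule: linorder_cases) (simp_all add: algebra_simps)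
  ultimately show thesis by (rule that)
qed

lemma scale_eq_1:
  assumes "\<gamma> > 0" and rel: "\<And>s t. in_window s \<Longrightarrow> in_window t \<Longrightarrow> y s + \<gamma> * x s = y t + \<gamma> * x t"
  shows "scale = 1"
proof -
  obtain e where e: "e > 0" "\<forall>z. \<bar>z - (t0 + 2 * w)\<bar> < e \<longrightarrow> z \<in> I"
    using nbhd_in_I[OF t0_2w_in] by blast
  define a where "a = t0 + min (e / 2) w"
  have a: "t0 < a" "a \<le> t0 + w" "a + w + w \<in> I" using e w_pos by (auto simp: a_def)
  have "a \<in> I" "a + w \<in> I"
    using mem_between[OF t0_in t0_2w_in, of a] mem_between[OF t0_in t0_2w_in, of "a + w"] a by auto
  then have "in_window a" "in_window (a + w)" using a by (simp_all add: in_window_def)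
  have "y a - y t0 = - \<gamma> * (x a - x t0)" using rel[OF \<open>in_window a\<close> in_window_t0] by (simp add: algebra_simps)
  moreover have "y (a + w) - y (t0 + w) = - \<gamma> * (x (a + w) - x (t0 + w))"
    using rel[OF \<open>in_window (a + w)\<close> in_window_t0_w] by (simp add: algebra_simps)
  moreover have "x (a + w) - x (t0 + w) = scale * (x a - x t0)"
    using x_increment_shift[OF in_window_t0 \<open>in_window a\<close> \<open>t0 < a\<close>] .
  moreover have "scale * (y (t0 + w) - y (a + w)) = y t0 - y a"
    using y_increment_shift[OF in_window_t0 \<open>in_window a\<close> \<open>t0 < a\<close>] .
  ultimately have "(scale * scale - 1) * \<gamma> * (x a - x t0) = 0" by algebra
  moreover have "x a - x t0 \<noteq> 0" using x_strict[OF t0_in \<open>a \<in> I\<close> \<open>t0 < a\<close>] by simp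
  ultimately have "scale * scale - 1 = 0" using \<open>\<gamma> > 0\<close> by simp
  then have "(scale - 1) * (scale + 1) = 0" by (simp add: algebra_simps)
  with scale_pos show ?thesis by simp
qed

lemma y_affine_in_x_if_x_offset_nonzero:
  assumes "x_offset \<noteq> 0"
  shows "\<exists>C \<gamma>. \<gamma> > 0 \<and> (\<forall>t\<in>I. y t = C - \<gamma> * x t)"
proof -
  obtain \<gamma> where "\<gamma> > 0"
    and rel: "\<And>s t. in_window s \<Longrightarrow> in_window t \<Longrightarrow> y s + \<gamma> * x s = y t + \<gamma> * x t"
    using window_affine_relation[OF assms] by blast
  define h where "h t = y t + \<gamma> * x t" for t
  have "scale = 1" using scale_eq_1[OF \<open>\<gamma> > 0\<close> rel] .
  then have h_shift: "h (t + w) = h t + y_offset + \<gamma> * x_offset" if "in_window t" for t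
    using x_shift[OF that] y_shift[OF that] unfolding h_def by (simp add: algebra_simps)
  text \<open>Points beyond the window are reached by one translation from inside it.\<close>
  have "h t = h t0" if "t \<in> I" for t
  proof (cases "in_window t")
    case True
    then show ?thesis using rel[OF _ in_window_t0] unfolding h_def by simp
  next
    case False
    then have "t + w \<notin> I" using that by (simp add: in_window_def)
    then have "t0 + 2 * w < t + w" using mem_between[OF that t0_2w_in, of "t + w"] w_pos by force
    then have "t - w \<in> I" using mem_between[OF t0_in that, of "t - w"] w_pos by simp
    then have "in_window (t - w)" using that by (simp add: in_window_def)
    then have "h t = h (t - w) + y_offset + \<gamma> * x_offset" using h_shift[of "t - w"] by simp
    also have "\<dots> = h t0 + y_offset + \<gamma> * x_offset"
      using rel[OF \<open>in_window (t - w)\<close> in_window_t0] unfolding h_def by simp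
    also have "\<dots> = h (t0 + w)" using h_shift[OF in_window_t0] by simp
    also have "\<dots> = h t0" using rel[OF in_window_t0_w in_window_t0] unfolding h_def by simp
    finally show ?thesis .
  qed
  then have "\<forall>t\<in>I. y t = h t0 - \<gamma> * x t" unfolding h_def by (simp add: algebra_simps)
  with \<open>\<gamma> > 0\<close> show ?thesis by blast
qed

end

context strict_path_equation
begin

lemma linear_case:
  assumes "I \<noteq> {}" and "\<gamma> > 0" and y_affine: "\<forall>t\<in>I. y t = C - \<gamma> * x t"
  shows "\<exists>a b c d. b > 0 \<and> d > 0 \<and> (\<forall>t\<in>I. x t = a + b * t \<and> y t = c - d * t)"
proof -
  have "x ((a + b) / 2) = (x a + x b) / 2" if ab: "a \<in> I" "b \<in> I" "a < b" for a b
  proof -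
    define m where "m = (a + b) / 2"
    have "m \<in> I" using mem_between[OF ab(1,2), of m] ab by (simp add: m_def)
    have "a < m" "m < b" "m - a = b - m" using ab by (simp_all add: m_def field_simps)
    then have "x a * y a + x m * y m - 2 * x a * y m = x m * y m + x b * y b - 2 * x m * y b"
      using value_shift_invariant[of a m m b] ab \<open>m \<in> I\<close> by simp
    moreover have "y a = C - \<gamma> * x a" "y m = C - \<gamma> * x m" "y b = C - \<gamma> * x b"
      using y_affine ab \<open>m \<in> I\<close> by auto
    ultimately have "((x m - x a) - (x b - x m)) * (y b + \<gamma> * x a) = 0" by algebra
    moreover have "y b + \<gamma> * x a > 0" using y_pos x_pos ab \<open>\<gamma> > 0\<close> by (simp add: add_pos_pos)
    ultimately show ?thesis by (simp add: m_def)
  qed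
  then obtain A B where AB: "\<forall>t\<in>I. x t = A + B * t"
    using midpoint_affine_imp_affine[OF interval_I x_cont] by blast
  obtain p q where "p \<in> I" "q \<in> I" "p < q" using \<open>I \<noteq> {}\<close> exists_greater_in_I by blast
  then have "B > 0" using affine_slope_pos[OF AB] x_strict by blast
  with AB y_affine \<open>\<gamma> > 0\<close> show ?thesis
    by (intro exI[of _ A] exI[of _ B] exI[of _ "C - \<gamma> * A"] exI[of _ "\<gamma> * B"]) (auto simp: algebra_simps)
qed

text \<open>Halving a gap with the multiplicative shift rule shows that \<open>ln x\<close> is midpoint affine and that
  \<open>x y\<close> is constant.\<close>
lemma exponential_case:
  assumes "I \<noteq> {}"
    and shift: "\<And>w t0. w > 0 \<Longrightarrow> t0 \<in> I \<Longrightarrow> t0 + 2 * w \<in> I \<Longrightarrow>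
            \<exists>m>0. \<forall>t. t \<in> I \<and> t + w \<in> I \<longrightarrow> x (t + w) = m * x t \<and> y (t + w) = y t / m"
  shows "\<exists>a b c. a > 0 \<and> b > 0 \<and> c > 0 \<and> (\<forall>t\<in>I. x t = a * exp (c * t) \<and> y t = b * exp (- c * t))"
proof -
  have halving: "ln (x ((a + b) / 2)) = (ln (x a) + ln (x b)) / 2 \<and> x b * y b = x a * y a"
    if ab: "a \<in> I" "b \<in> I" "a < b" for a b
  proof -
    define w where "w = (b - a) / 2"
    have "w > 0" "a + 2 * w = b" "a + w + w = b" "a + w = (a + b) / 2" using ab by (simp_all add: w_def field_simps)
    moreover have "a + 2 * w \<in> I" using ab \<open>a + 2 * w = b\<close> by simp
    ultimately obtain m where "m > 0"
      and m: "\<forall>t. t \<in> I \<and> t + w \<in> I \<longrightarrow> x (t + w) = m * x t \<and> y (t + w) = y t / m"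
      using shift[OF _ ab(1)] by blast
    have "a + w \<in> I" using mem_between[OF ab(1,2), of "a + w"] \<open>w > 0\<close> \<open>a + 2 * w = b\<close> by simp
    then have "x (a + w) = m * x a" "y (a + w) = y a / m" "x b = m * x (a + w)" "y b = y (a + w) / m"
      using m[rule_format, of a] m[rule_format, of "a + w"] ab \<open>a + w + w = b\<close> by auto
    moreover have "x a > 0" "x (a + w) > 0" using x_pos ab \<open>a + w \<in> I\<close> by auto
    ultimately show ?thesis using \<open>m > 0\<close> \<open>a + w = (a + b) / 2\<close> by (simp add: ln_mult)
  qed
  have "continuous_on I (\<lambda>t. ln (x t))"
    using x_cont x_pos by (intro continuous_on_ln) (metis less_irrefl)+
  then obtain A B where AB: "\<forall>t\<in>I. ln (x t) = A + B * t"
    using midpoint_affine_imp_affine[OF interval_I] halving by blast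
  obtain p q where pq: "p \<in> I" "q \<in> I" "p < q" using \<open>I \<noteq> {}\<close> exists_greater_in_I by blast
  then have "ln (x p) < ln (x q)" using x_strict x_pos by simp
  with AB pq have "B > 0" using affine_slope_pos[of I "\<lambda>t. ln (x t)"] by blast
  have x_exp: "x t = exp A * exp (B * t)" if "t \<in> I" for t
  proof -
    have "x t = exp (ln (x t))" using x_pos[OF that] by simp
    also have "\<dots> = exp A * exp (B * t)" using AB that by (simp add: exp_add)
    finally show ?thesis .
  qed
  have xy_const: "x t * y t = x p * y p" if "t \<in> I" for t
    using halving[OF that pq(1)] halving[OF pq(1) that] by (cases t p rule: linorder_cases) auto
  define b where "b = x p * y p / exp A"
  have "b > 0" using x_pos y_pos pq by (simp add: b_def)
  have "y t = b * exp (- B * t)" if "t \<in> I" for t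
    using xy_const[OF that] x_exp[OF that] by (simp add: b_def exp_minus field_simps)
  with x_exp \<open>b > 0\<close> \<open>B > 0\<close> show ?thesis
    by (intro exI[of _ "exp A"] exI[of _ b] exI[of _ B]) auto
qed

lemma strict_classification:
  assumes "I \<noteq> {}"
  shows "(\<exists>a b c d. b > 0 \<and> d > 0 \<and> (\<forall>t\<in>I. x t = a + b * t \<and> y t = c - d * t)) \<or>
         (\<exists>a b c. a > 0 \<and> b > 0 \<and> c > 0 \<and> (\<forall>t\<in>I. x t = a * exp (c * t) \<and> y t = b * exp (- c * t)))"
proof (cases "\<exists>C \<gamma>. \<gamma> > 0 \<and> (\<forall>t\<in>I. y t = C - \<gamma> * x t)")
  case True
  then show ?thesis using linear_case[OF assms] by blast
next
  case False
  have "\<exists>m>0. \<forall>t. t \<in> I \<and> t + w \<in> I \<longrightarrow> x (t + w) = m * x t \<and> y (t + w) = y t / m"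
    if "w > 0" "t0 \<in> I" "t0 + 2 * w \<in> I" for w t0
  proof -
    interpret shift_window I x y \<phi> w t0
      by unfold_locales (fact that)+
    show ?thesis
      using False y_affine_in_x_if_x_offset_nonzero multiplicative_shift_if_x_offset_zero scale_pos
      by blast
  qed
  then show ?thesis using exponential_case[OF assms] by blast
qed

end

section \<open>The four shapes\<close>

text \<open>The second argument confines the kink point of the broken line (ii).\<close>
definition path_shape :: "real set \<Rightarrow> real set \<Rightarrow> (real \<Rightarrow> real) \<Rightarrow> (real \<Rightarrow> real) \<Rightarrow> bool" where
  "path_shape T S x y \<longleftrightarrow>
     (\<exists>a b c. a > 0 \<and> c > 0 \<and>
        ((\<forall>t\<in>T. x t = a \<and> y t = b - c * t) \<or> (\<forall>t\<in>T. x t = b + c * t \<and> y t = a))) \<or>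
     (\<exists>s0 a b c d. s0 \<in> S \<and> a > 0 \<and> b > 0 \<and> c > 0 \<and> d > 0 \<and> a * c = b * d \<and>
        (\<forall>t\<in>T. x t = a + d * (t - s0) * (if t > s0 then 1 else 0) \<and>
                 y t = b - c * (t - s0) * (if t \<le> s0 then 1 else 0))) \<or>
     (\<exists>a b c d. b > 0 \<and> d > 0 \<and> (\<forall>t\<in>T. x t = a + b * t \<and> y t = c - d * t)) \<or>
     (\<exists>a b c. a > 0 \<and> b > 0 \<and> c > 0 \<and> (\<forall>t\<in>T. x t = a * exp (c * t) \<and> y t = b * exp (- c * t)))"

lemma path_shapeI_const_linear:
  "a > 0 \<Longrightarrow> c > 0 \<Longrightarrow> \<forall>t\<in>T. x t = a \<and> y t = b - c * t \<Longrightarrow> path_shape T S x y"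
  unfolding path_shape_def by (intro disjI1 exI[of _ a] exI[of _ b] exI[of _ c] conjI)

lemma path_shapeI_linear_const:
  "a > 0 \<Longrightarrow> c > 0 \<Longrightarrow> \<forall>t\<in>T. x t = b + c * t \<and> y t = a \<Longrightarrow> path_shape T S x y"
  unfolding path_shape_def by (rule disjI1, intro exI[of _ a] exI[of _ b] exI[of _ c] conjI disjI2)

lemma path_shapeI_kink:
  "s0 \<in> S \<Longrightarrow> a > 0 \<Longrightarrow> b > 0 \<Longrightarrow> c > 0 \<Longrightarrow> d > 0 \<Longrightarrow> a * c = b * d \<Longrightarrow>
    \<forall>t\<in>T. x t = a + d * (t - s0) * (if t > s0 then 1 else 0) \<and>
           y t = b - c * (t - s0) * (if t \<le> s0 then 1 else 0) \<Longrightarrow>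
    path_shape T S x y"
  unfolding path_shape_def by (intro disjI2 disjI1 exI conjI)

lemma path_shapeI_linear:
  "b > 0 \<Longrightarrow> d > 0 \<Longrightarrow> \<forall>t\<in>T. x t = a + b * t \<and> y t = c - d * t \<Longrightarrow> path_shape T S x y"
  unfolding path_shape_def by (intro disjI2 disjI1 exI conjI)

lemma path_shapeI_exponential:
  "a > 0 \<Longrightarrow> b > 0 \<Longrightarrow> c > 0 \<Longrightarrow> \<forall>t\<in>T. x t = a * exp (c * t) \<and> y t = b * exp (- c * t) \<Longrightarrow>
    path_shape T S x y"
  unfolding path_shape_def by (intro disjI2 exI conjI)

context path_equation
begin

lemma path_shape_if_nonconstant:
  assumes "I \<noteq> {}" and nonconst: "\<not> ((\<exists>k. \<forall>t\<in>I. x t = k) \<and> (\<exists>k. \<forall>t\<in>I. y t = k))"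
  shows "path_shape I I x y"
proof (cases "\<exists>s\<in>I. \<exists>t\<in>I. \<exists>r\<in>I. s < t \<and> t < r \<and> x s < x t \<and> y r < y t")
  case True
  then obtain c where "c \<in> I" "\<forall>t\<in>I. t < c \<longrightarrow> x t < x c" "\<forall>t\<in>I. c < t \<longrightarrow> y t < y c"
    using pivot_exists by blast
  then interpret strict_path_equation I x y \<phi>
    by unfold_locales (use strict_mono_from_pivot in blast)+
  from strict_classification[OF \<open>I \<noteq> {}\<close>] show ?thesis
    by (elim disjE exE conjE) (fact path_shapeI_linear path_shapeI_exponential)+
next
  case False
  have N: "x s = x t \<or> y t = y r" if "s \<in> I" "t \<in> I" "r \<in> I" "s < t" "t < r" for s t r
    using x_mono[of s t] y_antimono[of t r] False that by force
  consider (x_const) k where "\<forall>t\<in>I. x t = k" | (y_const) k where "\<forall>t\<in>I. y t = k"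
    | (kink) "\<not> (\<exists>k. \<forall>t\<in>I. x t = k)" "\<not> (\<exists>k. \<forall>t\<in>I. y t = k)"
    by blast
  then show ?thesis
  proof cases
    case x_const
    with nonconst have "\<not> (\<exists>k. \<forall>t\<in>I. y t = k)" by blast
    then obtain a b c where "a > 0" "c > 0" "\<forall>t\<in>I. x t = a \<and> y t = b - c * t"
      using x_constant_case[OF x_const] by blast
    then show ?thesis by (rule path_shapeI_const_linear)
  next
    case y_const
    with nonconst have "\<not> (\<exists>k. \<forall>t\<in>I. x t = k)" by blast
    then obtain a b c where "a > 0" "c > 0" "\<forall>t\<in>I. x t = b + c * t \<and> y t = a"
      using y_constant_case[OF y_const] by blast
    then show ?thesis by (rule path_shapeI_linear_const)
  next
    case kink
    then obtain s0 where "s0 \<in> I" "\<forall>t\<in>I. t \<le> s0 \<longrightarrow> x t = x s0" "\<forall>t\<in>I. s0 \<le> t \<longrightarrow> y t = y s0"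
      using kink_point_exists[OF N] by blast
    then obtain a b c d where "a > 0" "b > 0" "c > 0" "d > 0" "a * c = b * d"
      "\<forall>t\<in>I. x t = a + d * (t - s0) * (if t > s0 then 1 else 0) \<and>
              y t = b - c * (t - s0) * (if t \<le> s0 then 1 else 0)"
      using kink_case kink by blast
    with \<open>s0 \<in> I\<close> show ?thesis by (intro path_shapeI_kink)
  qed
qed

end

lemma path_shape_from_interior:
  fixes x y :: "real \<Rightarrow> real"
  assumes "convex T" and "interior T \<noteq> {}" and cx: "continuous_on T x" and cy: "continuous_on T y"
    and "path_shape (interior T) S x y"
  shows "path_shape T S x y"
proof -
  have extend: "\<forall>t\<in>T. x t = f t \<and> y t = g t"
    if "continuous_on T f" "continuous_on T g" "\<forall>t\<in>interior T. x t = f t \<and> y t = g t" for f g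
    using continuous_on_eq_from_interior[OF assms(1,2) cx that(1)]
      continuous_on_eq_from_interior[OF assms(1,2) cy that(2)] that(3) by blast
  have kink_cont: "continuous_on T (\<lambda>t. a + d * (t - s0) * (if t > s0 then 1 else 0))"
    "continuous_on T (\<lambda>t. b - c * (t - s0) * (if t \<le> s0 then 1 else 0))" for a b c d s0 :: real
  proof -
    have kinks: "(\<lambda>t. a + d * (t - s0) * (if t > s0 then 1 else 0)) = (\<lambda>t. a + d * max 0 (t - s0))"
      "(\<lambda>t. b - c * (t - s0) * (if t \<le> s0 then 1 else 0)) = (\<lambda>t. b - c * min 0 (t - s0))"
      by (auto simp: fun_eq_iff)
    show "continuous_on T (\<lambda>t. a + d * (t - s0) * (if t > s0 then 1 else 0))"
      "continuous_on T (\<lambda>t. b - c * (t - s0) * (if t \<le> s0 then 1 else 0))"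
      unfolding kinks by (intro continuous_intros)+
  qed
  from \<open>path_shape (interior T) S x y\<close>[unfolded path_shape_def] show ?thesis
  proof (elim disjE exE conjE)
    fix a b c assume "a > 0" "c > 0" "\<forall>t\<in>interior T. x t = a \<and> y t = b - c * t"
    then have "\<forall>t\<in>T. x t = a \<and> y t = b - c * t" by (intro extend) (auto intro!: continuous_intros)
    with \<open>a > 0\<close> \<open>c > 0\<close> show ?thesis by (rule path_shapeI_const_linear)
  next
    fix a b c assume "a > 0" "c > 0" "\<forall>t\<in>interior T. x t = b + c * t \<and> y t = a"
    then have "\<forall>t\<in>T. x t = b + c * t \<and> y t = a" by (intro extend) (auto intro!: continuous_intros)
    with \<open>a > 0\<close> \<open>c > 0\<close> show ?thesis by (rule path_shapeI_linear_const)
  next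
    fix s0 a b c d assume h: "s0 \<in> S" "a > 0" "b > 0" "c > 0" "d > 0" "a * c = b * d"
      "\<forall>t\<in>interior T. x t = a + d * (t - s0) * (if t > s0 then 1 else 0) \<and>
                      y t = b - c * (t - s0) * (if t \<le> s0 then 1 else 0)"
    then have "\<forall>t\<in>T. x t = a + d * (t - s0) * (if t > s0 then 1 else 0) \<and>
                      y t = b - c * (t - s0) * (if t \<le> s0 then 1 else 0)"
      by (intro extend kink_cont) auto
    with h show ?thesis by (intro path_shapeI_kink)
  next
    fix a b c d assume "b > 0" "d > 0" "\<forall>t\<in>interior T. x t = a + b * t \<and> y t = c - d * t"
    then have "\<forall>t\<in>T. x t = a + b * t \<and> y t = c - d * t" by (intro extend) (auto intro!: continuous_intros)
    with \<open>b > 0\<close> \<open>d > 0\<close> show ?thesis by (rule path_shapeI_linear)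
  next
    fix a b c assume "a > 0" "b > 0" "c > 0"
      "\<forall>t\<in>interior T. x t = a * exp (c * t) \<and> y t = b * exp (- c * t)"
    then have "\<forall>t\<in>T. x t = a * exp (c * t) \<and> y t = b * exp (- c * t)"
      by (intro extend) (auto intro!: continuous_intros)
    with \<open>a > 0\<close> \<open>b > 0\<close> \<open>c > 0\<close> show ?thesis by (rule path_shapeI_exponential)
  qed
qed

lemma path_eq_const_linear:
  assumes "\<forall>t\<in>T. x t = a \<and> y t = b - c * t"
  shows "path_eq T x y (\<lambda>u. a * c * u)"
  unfolding path_eq_def
proof (intro ballI impI)
  fix s t assume "s \<in> T" "t \<in> T"
  with assms have xy: "x s = a" "y s = b - c * s" "x t = a" "y t = b - c * t" by auto
  show "x s * y s + x t * y t - 2 * x s * y t = a * c * (t - s)"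
    unfolding xy by (simp add: algebra_simps)
qed

lemma path_eq_linear_const:
  assumes "\<forall>t\<in>T. x t = b + c * t \<and> y t = a"
  shows "path_eq T x y (\<lambda>u. a * c * u)"
  unfolding path_eq_def
proof (intro ballI impI)
  fix s t assume "s \<in> T" "t \<in> T"
  with assms have "x s = b + c * s" "y s = a" "x t = b + c * t" "y t = a" by auto
  then show "x s * y s + x t * y t - 2 * x s * y t = a * c * (t - s)" by (simp add: algebra_simps)
qed

lemma path_eq_kink:
  assumes "a * c = b * d"
    and shape: "\<forall>t\<in>T. x t = a + d * (t - s0) * (if t > s0 then 1 else 0) \<and>
                       y t = b - c * (t - s0) * (if t \<le> s0 then 1 else 0)"
  shows "path_eq T x y (\<lambda>u. a * c * u)"
  unfolding path_eq_def
proof (intro ballI impI)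
  fix s t assume "s \<in> T" "t \<in> T" "s < t"
  with shape have xs: "x s = a + d * (s - s0) * (if s > s0 then 1 else 0)"
    "y s = b - c * (s - s0) * (if s \<le> s0 then 1 else 0)"
    and xt: "x t = a + d * (t - s0) * (if t > s0 then 1 else 0)"
    "y t = b - c * (t - s0) * (if t \<le> s0 then 1 else 0)"
    by auto
  consider "t \<le> s0" | "s0 < s" | "s \<le> s0" "s0 < t" using \<open>s < t\<close> by linarith
  then show "x s * y s + x t * y t - 2 * x s * y t = a * c * (t - s)"
  proof cases
    case 1
    with \<open>s < t\<close> show ?thesis unfolding xs xt by (simp add: algebra_simps)
  next
    case 2
    with \<open>s < t\<close> assms(1) show ?thesis unfolding xs xt by (simp add: algebra_simps)
  next
    case 3
    then have "x s = a" "y s = b - c * (s - s0)" "x t = a + d * (t - s0)" "y t = b" using xs xt by auto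
    with assms(1) show ?thesis by algebra
  qed
qed

lemma path_eq_linear:
  assumes "\<forall>t\<in>T. x t = a + b * t \<and> y t = c - d * t"
  shows "path_eq T x y (\<lambda>u. (a * d + b * c) * u - b * d * u\<^sup>2)"
  unfolding path_eq_def
proof (intro ballI impI)
  fix s t assume "s \<in> T" "t \<in> T"
  with assms have "x s = a + b * s" "y s = c - d * s" "x t = a + b * t" "y t = c - d * t" by auto
  then show "x s * y s + x t * y t - 2 * x s * y t = (a * d + b * c) * (t - s) - b * d * (t - s)\<^sup>2"
    by algebra
qed

lemma path_eq_exponential:
  assumes "\<forall>t\<in>T. x t = a * exp (c * t) \<and> y t = b * exp (- c * t)"
  shows "path_eq T x y (\<lambda>u. 2 * a * b * (1 - exp (- c * u)))"
  unfolding path_eq_def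
proof (intro ballI impI)
  fix s t assume "s \<in> T" "t \<in> T" "s < t"
  with assms have xy: "x s = a * exp (c * s)" "y s = b * exp (- c * s)"
    "x t = a * exp (c * t)" "y t = b * exp (- c * t)" by auto
  have "exp (c * s) * exp (- c * s) = 1" "exp (c * t) * exp (- c * t) = 1"
    "exp (c * s) * exp (- c * t) = exp (- c * (t - s))"
    by (simp_all add: algebra_simps flip: exp_add)
  moreover have "x s * y s = a * b * (exp (c * s) * exp (- c * s))"
    "x t * y t = a * b * (exp (c * t) * exp (- c * t))"
    "x s * y t = a * b * (exp (c * s) * exp (- c * t))"
    unfolding xy by (simp_all add: ac_simps)
  ultimately show "x s * y s + x t * y t - 2 * x s * y t = 2 * a * b * (1 - exp (- c * (t - s)))"
    by (simp add: algebra_simps)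
qed

lemma path_eq_unique_on_gaps:
  assumes "path_eq T x y \<phi>" and "path_eq T x y \<psi>" and "u \<in> {t - s | s t. s \<in> T \<and> t \<in> T \<and> t > s}"
  shows "\<phi> u = \<psi> u"
  using assms unfolding path_eq_def by force

lemma path_shape_imp_path_eq:
  assumes "path_shape T S x y"
  shows "\<exists>\<phi>. path_eq T x y \<phi>"
  using assms unfolding path_shape_def
  by (elim disjE exE conjE)
    (blast intro: path_eq_const_linear path_eq_linear_const path_eq_kink path_eq_linear path_eq_exponential)+

lemma path_eq_gap_function:
  assumes pe: "path_eq T x y \<phi>" and "path_shape T S x y"
  defines "D \<equiv> {t - s | s t. s \<in> T \<and> t \<in> T \<and> t > s}"
  shows "(\<exists>a b c. a > 0 \<and> c > 0 \<and>
        ((\<forall>t\<in>T. x t = a \<and> y t = b - c * t) \<or> (\<forall>t\<in>T. x t = b + c * t \<and> y t = a)) \<and>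
        (\<forall>u\<in>D. \<phi> u = a * c * u)) \<or>
      (\<exists>s0 a b c d. s0 \<in> S \<and> a > 0 \<and> b > 0 \<and> c > 0 \<and> d > 0 \<and> a * c = b * d \<and>
        (\<forall>t\<in>T. x t = a + d * (t - s0) * (if t > s0 then 1 else 0) \<and>
                 y t = b - c * (t - s0) * (if t \<le> s0 then 1 else 0)) \<and>
        (\<forall>u\<in>D. \<phi> u = a * c * u)) \<or>
      (\<exists>a b c d. b > 0 \<and> d > 0 \<and> (\<forall>t\<in>T. x t = a + b * t \<and> y t = c - d * t) \<and>
        (\<forall>u\<in>D. \<phi> u = (a * d + b * c) * u - b * d * u\<^sup>2)) \<or>
      (\<exists>a b c. a > 0 \<and> b > 0 \<and> c > 0 \<and> (\<forall>t\<in>T. x t = a * exp (c * t) \<and> y t = b * exp (- c * t)) \<and>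
        (\<forall>u\<in>D. \<phi> u = 2 * a * b * (1 - exp (- c * u))))"
  using \<open>path_shape T S x y\<close> unfolding path_shape_def
proof (elim disjE exE conjE)
  fix a b c assume "a > 0" "c > 0" and shape: "\<forall>t\<in>T. x t = a \<and> y t = b - c * t"
  then have "\<forall>u\<in>D. \<phi> u = a * c * u"
    using path_eq_unique_on_gaps[OF pe path_eq_const_linear[OF shape]] by (simp add: D_def)
  with \<open>a > 0\<close> \<open>c > 0\<close> shape show ?thesis by (intro disjI1 exI[of _ a] exI[of _ b] exI[of _ c] conjI)
next
  fix a b c assume "a > 0" "c > 0" and shape: "\<forall>t\<in>T. x t = b + c * t \<and> y t = a"
  then have "\<forall>u\<in>D. \<phi> u = a * c * u"
    using path_eq_unique_on_gaps[OF pe path_eq_linear_const[OF shape]] by (simp add: D_def)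
  note phi = this
  show ?thesis
    by (rule disjI1)
      (use \<open>a > 0\<close> \<open>c > 0\<close> shape phi in \<open>intro exI[of _ a] exI[of _ b] exI[of _ c] conjI disjI2\<close>)
next
  fix s0 a b c d assume kink: "s0 \<in> S" "a > 0" "b > 0" "c > 0" "d > 0" "a * c = b * d"
    and shape: "\<forall>t\<in>T. x t = a + d * (t - s0) * (if t > s0 then 1 else 0) \<and>
                         y t = b - c * (t - s0) * (if t \<le> s0 then 1 else 0)"
  then have "\<forall>u\<in>D. \<phi> u = a * c * u"
    using path_eq_unique_on_gaps[OF pe path_eq_kink[OF kink(6) shape]] by (simp add: D_def)
  note phi = this
  show ?thesis
    by (rule disjI2, rule disjI1)
      (use kink shape phi in \<open>intro exI[of _ s0] exI[of _ a] exI[of _ b] exI[of _ c] exI[of _ d] conjI\<close>)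
next
  fix a b c d assume "b > 0" "d > 0" and shape: "\<forall>t\<in>T. x t = a + b * t \<and> y t = c - d * t"
  then have "\<forall>u\<in>D. \<phi> u = (a * d + b * c) * u - b * d * u\<^sup>2"
    using path_eq_unique_on_gaps[OF pe path_eq_linear[OF shape]] by (simp add: D_def)
  with \<open>b > 0\<close> \<open>d > 0\<close> shape show ?thesis
    by (intro disjI2 disjI1 exI[of _ a] exI[of _ b] exI[of _ c] exI[of _ d] conjI)
next
  fix a b c assume "a > 0" "b > 0" "c > 0"
    and shape: "\<forall>t\<in>T. x t = a * exp (c * t) \<and> y t = b * exp (- c * t)"
  then have "\<forall>u\<in>D. \<phi> u = 2 * a * b * (1 - exp (- c * u))"
    using path_eq_unique_on_gaps[OF pe path_eq_exponential[OF shape]] by (simp add: D_def)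
  with \<open>a > 0\<close> \<open>b > 0\<close> \<open>c > 0\<close> shape show ?thesis
    by (intro disjI2 exI[of _ a] exI[of _ b] exI[of _ c] conjI)
qed

lemma decreasing_path_interior_nonempty:
  assumes "decreasing_path T x y"
  shows "interior T \<noteq> {}"
proof -
  have "is_interval T" and nonconst: "\<not> (\<exists>k. \<forall>t\<in>T. x t = k) \<or> \<not> (\<exists>k. \<forall>t\<in>T. y t = k)"
    using assms by (simp_all add: decreasing_path_def)
  obtain p q where "p \<in> T" "q \<in> T" "p < q"
  proof (cases "T = {}")
    case False
    then obtain p where "p \<in> T" by blast
    with nonconst obtain q where "q \<in> T" "q \<noteq> p" by blast
    then show thesis using that \<open>p \<in> T\<close> by (cases p q rule: linorder_cases) auto
  qed (use nonconst in simp)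
  then have "{p<..<q} \<subseteq> interior T"
    using mem_is_interval_1_I[OF \<open>is_interval T\<close> \<open>p \<in> T\<close> \<open>q \<in> T\<close>]
    by (intro interior_maximal) auto
  with \<open>p < q\<close> show ?thesis by (metis dense empty_iff greaterThanLessThan_iff subset_empty)
qed

lemma decreasing_path_equation_interior:
  assumes "decreasing_path T x y" and "path_eq T x y \<phi>"
  shows "path_equation (interior T) x y \<phi>"
proof
  have T: "is_interval T" "mono_on T x" "\<forall>s\<in>T. \<forall>t\<in>T. s \<le> t \<longrightarrow> y t \<le> y s"
    "continuous_on T x" "continuous_on T y" "\<forall>t\<in>interior T. x t > 0 \<and> y t > 0"
    using assms(1) by (simp_all add: decreasing_path_def)
  show "open (interior T)" by simp
  show "is_interval (interior T)"
    using T(1) by (simp add: is_interval_convex_1 convex_interior)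
  show "continuous_on (interior T) x" "continuous_on (interior T) y"
    using T(4,5) interior_subset by (auto intro: continuous_on_subset)
  fix s t assume "s \<in> interior T" "t \<in> interior T"
  then have "s \<in> T" "t \<in> T" using interior_subset by auto
  show "s \<le> t \<Longrightarrow> x s \<le> x t" using T(2) \<open>s \<in> T\<close> \<open>t \<in> T\<close> by (simp add: monotone_onD)
  show "s \<le> t \<Longrightarrow> y t \<le> y s" using T(3) \<open>s \<in> T\<close> \<open>t \<in> T\<close> by simp
  show "s < t \<Longrightarrow> x s * y s + x t * y t - 2 * x s * y t = \<phi> (t - s)"
    using assms(2) \<open>s \<in> T\<close> \<open>t \<in> T\<close> by (simp add: path_eq_def)
next
  fix t assume "t \<in> interior T"
  then show "x t > 0" "y t > 0" using assms(1) by (simp_all add: decreasing_path_def)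
qed

lemma decreasing_path_shape:
  assumes "decreasing_path T x y" and "path_eq T x y \<phi>"
  shows "path_shape T (interior T) x y"
proof -
  interpret path_equation "interior T" x y \<phi>
    using decreasing_path_equation_interior[OF assms] .
  have "convex T" "continuous_on T x" "continuous_on T y"
    and nonconst: "\<not> (\<exists>k. \<forall>t\<in>T. x t = k) \<or> \<not> (\<exists>k. \<forall>t\<in>T. y t = k)"
    using assms(1) by (simp_all add: decreasing_path_def is_interval_convex_1)
  note ne = decreasing_path_interior_nonempty[OF assms(1)]
  have "\<not> ((\<exists>k. \<forall>t\<in>interior T. x t = k) \<and> (\<exists>k. \<forall>t\<in>interior T. y t = k))"
  proof
    assume "(\<exists>k. \<forall>t\<in>interior T. x t = k) \<and> (\<exists>k. \<forall>t\<in>interior T. y t = k)"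
    then obtain k l where "\<forall>t\<in>interior T. x t = k" "\<forall>t\<in>interior T. y t = l" by blast
    then have "\<forall>t\<in>T. x t = k" "\<forall>t\<in>T. y t = l"
      using continuous_on_eq_from_interior[OF \<open>convex T\<close> ne \<open>continuous_on T x\<close> continuous_on_const]
        continuous_on_eq_from_interior[OF \<open>convex T\<close> ne \<open>continuous_on T y\<close> continuous_on_const]
      by blast+
    with nonconst show False by blast
  qed
  with ne have "path_shape (interior T) (interior T) x y" by (rule path_shape_if_nonconstant)
  then show ?thesis
    using path_shape_from_interior[OF \<open>convex T\<close> ne \<open>continuous_on T x\<close> \<open>continuous_on T y\<close>] by blast
qed

theorem lemma2:
  fixes T :: "real set" and x y :: "real \<Rightarrow> real"
  assumes "decreasing_path T x y"
  defines "D \<equiv> {t - s | s t. s \<in> T \<and> t \<in> T \<and> t > s}"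
  shows "((\<exists>\<phi>. path_eq T x y \<phi>) \<longleftrightarrow>
     ((\<exists>a b c. a > 0 \<and> c > 0 \<and>
        ((\<forall>t\<in>T. x t = a \<and> y t = b - c * t) \<or> (\<forall>t\<in>T. x t = b + c * t \<and> y t = a))) \<or>
      (\<exists>s0 a b c d. s0 \<in> interior T \<and> a > 0 \<and> b > 0 \<and> c > 0 \<and> d > 0 \<and> a * c = b * d \<and>
        (\<forall>t\<in>T. x t = a + d * (t - s0) * (if t > s0 then 1 else 0) \<and>
                 y t = b - c * (t - s0) * (if t \<le> s0 then 1 else 0))) \<or>
      (\<exists>a b c d. b > 0 \<and> d > 0 \<and> (\<forall>t\<in>T. x t = a + b * t \<and> y t = c - d * t)) \<or>
      (\<exists>a b c. a > 0 \<and> b > 0 \<and> c > 0 \<and> (\<forall>t\<in>T. x t = a * exp (c * t) \<and> y t = b * exp (- c * t)))))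
   \<and>
   (\<forall>\<phi>. path_eq T x y \<phi> \<longrightarrow>
     ((\<exists>a b c. a > 0 \<and> c > 0 \<and>
        ((\<forall>t\<in>T. x t = a \<and> y t = b - c * t) \<or> (\<forall>t\<in>T. x t = b + c * t \<and> y t = a)) \<and>
        (\<forall>u\<in>D. \<phi> u = a * c * u)) \<or>
      (\<exists>s0 a b c d. s0 \<in> interior T \<and> a > 0 \<and> b > 0 \<and> c > 0 \<and> d > 0 \<and> a * c = b * d \<and>
        (\<forall>t\<in>T. x t = a + d * (t - s0) * (if t > s0 then 1 else 0) \<and>
                 y t = b - c * (t - s0) * (if t \<le> s0 then 1 else 0)) \<and>
        (\<forall>u\<in>D. \<phi> u = a * c * u)) \<or>
      (\<exists>a b c d. b > 0 \<and> d > 0 \<and> (\<forall>t\<in>T. x t = a + b * t \<and> y t = c - d * t) \<and>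
        (\<forall>u\<in>D. \<phi> u = (a * d + b * c) * u - b * d * u\<^sup>2)) \<or>
      (\<exists>a b c. a > 0 \<and> b > 0 \<and> c > 0 \<and> (\<forall>t\<in>T. x t = a * exp (c * t) \<and> y t = b * exp (- c * t)) \<and>
        (\<forall>u\<in>D. \<phi> u = 2 * a * b * (1 - exp (- c * u))))))"
proof -
  have "(\<exists>\<phi>. path_eq T x y \<phi>) \<longleftrightarrow> path_shape T (interior T) x y"
    using decreasing_path_shape[OF assms(1)] path_shape_imp_path_eq by blast
  then show ?thesis
    unfolding D_def path_shape_def
    by (intro conjI allI impI path_eq_gap_function[OF _ decreasing_path_shape[OF assms(1)]])
qed

end
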